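(* Let $\mathcal{H}$ be a complex infinite-dimensional Hilbert space, let $n>1$ be an integer, and let $A\in B(\mathcal{H})$ satisfy $A^*A^n=A^nA^*$ (equivalently, $A^n$ is normal). Suppose $\sigma(A)$ is contained in an angle with vertex at the origin of width less than $\frac{2\pi}{n}$. Then for every non-zero $\lambda$ which is an isolated point of $\sigma(A)$, the Riesz projection $P_A(\lambda)$ is self-adjoint.
   Context: $B(\mathcal{H})$ denotes the algebra of bounded linear operators on $\mathcal{H}$. For $\lambda$ isolated in $\sigma(A)$, the Riesz projection is $P_A(\lambda)=\frac{1}{2\pi i}\int_\Gamma(\mu-A)^{-1}\,d\mu$, where $\Gamma$ is a positively oriented path enclosing $\lambda$ and separating it from the rest of $\sigma(A)$. *)

theory Defs
  imports "HOL-Complex_Analysis.Complex_Analysis"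
begin

text \<open>Complex Hilbert spaces (not available in the distribution): a real Banach space
  with a compatible complex scalar multiplication and a complex inner product,
  conjugate-linear in the first and linear in the second argument, inducing the norm.\<close>

class complex_hilbert = banach +
  fixes scaleC :: "complex \<Rightarrow> 'a \<Rightarrow> 'a" (infixr \<open>*\<^sub>C\<close> 75)
    and cinner :: "'a \<Rightarrow> 'a \<Rightarrow> complex"
  assumes scaleC_of_real: "complex_of_real r *\<^sub>C x = r *\<^sub>R x"
    and scaleC_add_right: "c *\<^sub>C (x + y) = c *\<^sub>C x + c *\<^sub>C y"
    and scaleC_add_left: "(b + c) *\<^sub>C x = b *\<^sub>C x + c *\<^sub>C x"
    and scaleC_scaleC: "b *\<^sub>C (c *\<^sub>C x) = (b * c) *\<^sub>C x"
    and cinner_conj: "cinner x y = cnj (cinner y x)"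
    and cinner_add_right: "cinner x (y + z) = cinner x y + cinner x z"
    and cinner_scaleC_right: "cinner x (c *\<^sub>C y) = c * cinner x y"
    and cinner_self_nonneg: "0 \<le> Re (cinner x x)"
    and norm_cinner: "norm x = sqrt (Re (cinner x x))"

definition infinite_dimensional :: "'a::complex_hilbert itself \<Rightarrow> bool" where
  "infinite_dimensional _ \<longleftrightarrow>
     \<not> (\<exists>S::'a set. finite S \<and> (\<forall>x. \<exists>c. x = (\<Sum>s\<in>S. c s *\<^sub>C s)))"

definition bounded_op :: "('a::complex_hilbert \<Rightarrow> 'a) \<Rightarrow> bool" where
  "bounded_op T \<longleftrightarrow> (\<forall>x y. T (x + y) = T x + T y) \<and> (\<forall>c x. T (c *\<^sub>C x) = c *\<^sub>C T x)
      \<and> (\<exists>K. \<forall>x. norm (T x) \<le> norm x * K)"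

definition cadjoint :: "('a::complex_hilbert \<Rightarrow> 'a) \<Rightarrow> ('a \<Rightarrow> 'a)" where
  "cadjoint T = (THE S. \<forall>x y. cinner (T x) y = cinner x (S y))"

definition invertible_op :: "('a::complex_hilbert \<Rightarrow> 'a) \<Rightarrow> bool" where
  "invertible_op T \<longleftrightarrow> (\<exists>B. bounded_op B \<and> B \<circ> T = id \<and> T \<circ> B = id)"

definition shift_op :: "complex \<Rightarrow> ('a::complex_hilbert \<Rightarrow> 'a) \<Rightarrow> ('a \<Rightarrow> 'a)" where
  "shift_op \<mu> A = (\<lambda>x. \<mu> *\<^sub>C x - A x)"

definition op_spectrum :: "('a::complex_hilbert \<Rightarrow> 'a) \<Rightarrow> complex set" where
  "op_spectrum A = {\<mu>. \<not> invertible_op (shift_op \<mu> A)}"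

definition resolvent :: "('a::complex_hilbert \<Rightarrow> 'a) \<Rightarrow> complex \<Rightarrow> ('a \<Rightarrow> 'a)" where
  "resolvent A \<mu> = (THE B. bounded_op B \<and> B \<circ> shift_op \<mu> A = id \<and> shift_op \<mu> A \<circ> B = id)"

text \<open>The Riesz projection (1/2\<pi>i) \<integral>_\<Gamma> (\<mu> - A)^{-1} d\<mu>, the operator-valued integral
  being taken in the weak sense: <y, P x> = (1/2\<pi>i) \<integral>_\<Gamma> <y, (\<mu>-A)^{-1} x> d\<mu>.\<close>
definition riesz_projection ::
  "('a::complex_hilbert \<Rightarrow> 'a) \<Rightarrow> (real \<Rightarrow> complex) \<Rightarrow> ('a \<Rightarrow> 'a)" where
  "riesz_projection A \<Gamma> = (\<lambda>x. THE v. \<forall>y.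
      cinner y v = contour_integral \<Gamma> (\<lambda>\<mu>. cinner y (resolvent A \<mu> x)) / (2 * pi * \<i>))"

definition riesz_contour :: "('a::complex_hilbert \<Rightarrow> 'a) \<Rightarrow> complex \<Rightarrow> (real \<Rightarrow> complex) \<Rightarrow> bool" where
  "riesz_contour A l \<Gamma> \<longleftrightarrow> valid_path \<Gamma> \<and> pathfinish \<Gamma> = pathstart \<Gamma>
     \<and> path_image \<Gamma> \<inter> op_spectrum A = {}
     \<and> winding_number \<Gamma> l = 1
     \<and> (\<forall>\<mu>\<in>op_spectrum A - {l}. winding_number \<Gamma> \<mu> = 0)"

definition self_adjoint_op :: "('a::complex_hilbert \<Rightarrow> 'a) \<Rightarrow> bool" where
  "self_adjoint_op T \<longleftrightarrow> (\<forall>x y. cinner (T x) y = cinner x (T y))"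

definition angle_sector :: "real \<Rightarrow> real \<Rightarrow> complex set" where
  "angle_sector \<theta> w = {z. z = 0 \<or> (\<exists>t. \<theta> \<le> t \<and> t \<le> \<theta> + w \<and> z = of_real (cmod z) * cis t)}"

end

theory Submission
  imports Defs
begin

text \<open>Let \<open>T = \<lambda>\<^sup>n - A\<^sup>n\<close>, a normal operator, and let \<open>P\<close> be the Riesz projection.

  \<^item> The range of \<open>P\<close> lies in \<open>ker T\<close>. For \<open>v = P x\<close>, \<open>\<langle>y, T\<^sup>k v\<rangle>\<close> is the contour integral of
    \<open>(\<lambda>\<^sup>n - \<mu>\<^sup>n)\<^sup>k \<langle>y, (\<mu> - A)\<^sup>-\<^sup>1 x\<rangle>\<close>; moved to a small circle around \<open>\<lambda>\<close> it shows that
    \<open>\<parallel>T\<^sup>k v\<parallel>\<close> decays faster than \<open>r\<^sup>k\<close> for every \<open>r > 0\<close>, whereas for a normal \<open>T\<close> it grows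
    at least like \<open>(\<parallel>T v\<parallel> / \<parallel>v\<parallel>)\<^sup>k \<parallel>v\<parallel>\<close>.
  \<^item> On \<open>ker T = ker T\<^sup>*\<close> the operator \<open>A\<^sup>*\<^sup>n\<close> acts as \<open>cnj \<lambda>\<^sup>n\<close>, and in fact \<open>A\<^sup>*\<close> acts
    as \<open>cnj \<lambda>\<close>: the components of a vector of \<open>ker T\<^sup>*\<close> along the other \<open>n\<close>-th roots of
    \<open>cnj \<lambda>\<^sup>n\<close> are eigenvectors of \<open>A\<^sup>*\<close>, and they vanish because, by the sector condition,
    \<open>\<lambda>\<close> is the only \<open>n\<close>-th root of \<open>\<lambda>\<^sup>n\<close> in \<open>\<sigma>(A)\<close>.
  \<^item> If \<open>A\<^sup>* u = cnj \<lambda> u\<close> then \<open>\<langle>u, (\<mu> - A)\<^sup>-\<^sup>1 x\<rangle> = \<langle>u, x\<rangle> / (\<mu> - \<lambda>)\<close>, so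
    \<open>\<langle>u, P x\<rangle> = \<langle>u, x\<rangle>\<close>. With \<open>u = P y\<close> this gives \<open>\<langle>P y, x\<rangle> = \<langle>P y, P x\<rangle>\<close>, which is
    hermitian in \<open>x, y\<close>.\<close>

section \<open>Complex Hilbert spaces\<close>

lemma scaleC_one [simp]: "(1::complex) *\<^sub>C (x::'a::complex_hilbert) = x"
  using scaleC_of_real[of 1 x] by simp

lemma scaleC_zero_left [simp]: "(0::complex) *\<^sub>C (x::'a::complex_hilbert) = 0"
  using scaleC_of_real[of 0 x] by simp

lemma scaleC_zero_right [simp]: "c *\<^sub>C (0::'a::complex_hilbert) = 0"
  using scaleC_add_right[of c 0 0] by simp

lemma scaleC_minus_right: "c *\<^sub>C (- x) = - (c *\<^sub>C (x::'a::complex_hilbert))"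
  using scaleC_add_right[of c x "-x"] by (simp add: minus_unique)

lemma scaleC_diff_right: "c *\<^sub>C (x - y) = c *\<^sub>C x - c *\<^sub>C (y::'a::complex_hilbert)"
  using scaleC_add_right[of c x "-y"] scaleC_minus_right[of c y] by simp

lemma scaleC_minus_left: "(- c) *\<^sub>C (x::'a::complex_hilbert) = - (c *\<^sub>C x)"
  using scaleC_add_left[of c "-c" x] by (simp add: minus_unique)

lemma scaleC_diff_left: "(b - c) *\<^sub>C (x::'a::complex_hilbert) = b *\<^sub>C x - c *\<^sub>C x"
  using scaleC_add_left[of b "-c" x] scaleC_minus_left[of c x] by simp

lemma scaleC_sum_right: "c *\<^sub>C (\<Sum>i\<in>I. f i) = (\<Sum>i\<in>I. c *\<^sub>C (f i::'a::complex_hilbert))"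
  by (induction I rule: infinite_finite_induct) (auto simp: scaleC_add_right)

lemma scaleC_sum_left: "(\<Sum>i\<in>I. f i) *\<^sub>C (x::'a::complex_hilbert) = (\<Sum>i\<in>I. f i *\<^sub>C x)"
  by (induction I rule: infinite_finite_induct) (auto simp: scaleC_add_left)

lemma scaleC_left_cancel: "c \<noteq> 0 \<Longrightarrow> c *\<^sub>C x = c *\<^sub>C y \<longleftrightarrow> (x::'a::complex_hilbert) = y"
  by (metis scaleC_one scaleC_scaleC field_class.field_inverse mult.commute)

lemma cinner_add_left: "cinner (x + y) z = cinner x z + cinner (y::'a::complex_hilbert) z"
  by (metis cinner_conj cinner_add_right complex_cnj_add)

lemma cinner_scaleC_left: "cinner (c *\<^sub>C x) y = cnj c * cinner (x::'a::complex_hilbert) y"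
  by (metis cinner_conj cinner_scaleC_right complex_cnj_mult complex_cnj_cnj)

lemma cinner_zero_right [simp]: "cinner x (0::'a::complex_hilbert) = 0"
  using cinner_add_right[of x 0 0] by simp

lemma cinner_zero_left [simp]: "cinner (0::'a::complex_hilbert) x = 0"
  using cinner_add_left[of 0 0 x] by simp

lemma cinner_minus_right: "cinner x (- y) = - cinner x (y::'a::complex_hilbert)"
  using cinner_add_right[of x y "-y"] by (simp add: minus_unique)

lemma cinner_minus_left: "cinner (- x) y = - cinner (x::'a::complex_hilbert) y"
  using cinner_add_left[of x "-x" y] by (simp add: minus_unique)

lemma cinner_diff_right: "cinner x (y - z) = cinner x y - cinner x (z::'a::complex_hilbert)"
  using cinner_add_right[of x y "-z"] cinner_minus_right[of x z] by simp

lemma cinner_diff_left: "cinner (x - y) z = cinner x z - cinner (y::'a::complex_hilbert) z"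
  using cinner_add_left[of x "-y" z] cinner_minus_left[of y z] by simp

lemma cinner_sum_right: "cinner x (\<Sum>i\<in>I. f i) = (\<Sum>i\<in>I. cinner (x::'a::complex_hilbert) (f i))"
  by (induction I rule: infinite_finite_induct) (auto simp: cinner_add_right)

lemma cinner_self: "cinner x x = complex_of_real ((norm (x::'a::complex_hilbert))\<^sup>2)"
proof -
  have "Im (cinner x x) = 0"
    using arg_cong[where f=Im, OF cinner_conj[of x x]] by simp
  moreover have "Re (cinner x x) = (norm x)\<^sup>2"
    using norm_cinner[of x] cinner_self_nonneg[of x] by simp
  ultimately show ?thesis by (simp add: complex_eq_iff)
qed

lemma power2_norm_eq_cinner: "(norm (x::'a::complex_hilbert))\<^sup>2 = Re (cinner x x)"
  by (simp add: cinner_self)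

lemma cinner_eq_cinner_right_imp_eq: "(\<And>y. cinner y x = cinner y z) \<Longrightarrow> (x::'a::complex_hilbert) = z"
  using cinner_diff_right[of "x - z" x z] by (simp add: cinner_self)

lemma norm_scaleC [simp]: "norm (c *\<^sub>C x) = cmod c * norm (x::'a::complex_hilbert)"
proof -
  have "(norm (c *\<^sub>C x))\<^sup>2 = Re ((cnj c * c) * cinner x x)"
    unfolding power2_norm_eq_cinner cinner_scaleC_left cinner_scaleC_right by (simp only: ac_simps)
  also have "cnj c * c = of_real ((cmod c)\<^sup>2)"
    by (metis complex_norm_square mult.commute of_real_power)
  finally have "(norm (c *\<^sub>C x))\<^sup>2 = (cmod c * norm x)\<^sup>2"
    by (simp add: cinner_self power_mult_distrib)
  then show ?thesis by (simp add: power2_eq_iff_nonneg)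
qed

lemma cmod_cinner_le: "cmod (cinner x y) \<le> norm (x::'a::complex_hilbert) * norm y"
proof (cases "y = 0")
  case True then show ?thesis by simp
next
  case False
  define t where "t = cinner y x / cinner y y"
  have yy: "cinner y y = of_real ((norm y)\<^sup>2)" by (rule cinner_self)
  have ny: "norm y > 0" using False by simp
  have cancel1: "t * cinner x y = cnj t * cinner y x"
    unfolding t_def yy by (subst (2) cinner_conj) (simp add: mult.commute)
  have "t * cinner y y = cinner y x"
    using ny unfolding t_def yy by simp
  then have cancel2: "cnj t * t * cinner y y = cnj t * cinner y x"
    by (simp add: mult.assoc)
  have "cnj t * cinner y x = cnj (cinner y x) * cinner y x / of_real ((norm y)\<^sup>2)"
    unfolding t_def yy by simp
  also have "cnj (cinner y x) * cinner y x = of_real ((cmod (cinner x y))\<^sup>2)"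
    by (metis cinner_conj complex_mod_cnj complex_norm_square mult.commute of_real_power)
  finally have tx: "cnj t * cinner y x = of_real ((cmod (cinner x y))\<^sup>2 / (norm y)\<^sup>2)"
    by simp
  have "0 \<le> Re (cinner (x - t *\<^sub>C y) (x - t *\<^sub>C y))" by (rule cinner_self_nonneg)
  also have "cinner (x - t *\<^sub>C y) (x - t *\<^sub>C y)
      = cinner x x - t * cinner x y - cnj t * cinner y x + cnj t * t * cinner y y"
    by (simp add: cinner_diff_left cinner_diff_right cinner_scaleC_left cinner_scaleC_right
        algebra_simps)
  finally have "0 \<le> (norm x)\<^sup>2 - (cmod (cinner x y))\<^sup>2 / (norm y)\<^sup>2"
    unfolding cancel1 cancel2 tx by (simp add: cinner_self)
  then have "(cmod (cinner x y))\<^sup>2 \<le> (norm x * norm y)\<^sup>2"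
    using ny by (simp add: field_simps power_mult_distrib)
  then show ?thesis by (simp add: power2_le_iff_abs_le)
qed

lemma bounded_linear_cinner_right: "bounded_linear (cinner (y::'a::complex_hilbert))"
proof
  show "cinner y (a + b) = cinner y a + cinner y b" for a b by (rule cinner_add_right)
  show "cinner y (r *\<^sub>R a) = r *\<^sub>R cinner y a" for r a
    by (metis cinner_scaleC_right scaleC_of_real scaleR_conv_of_real)
  show "\<exists>K. \<forall>x. norm (cinner y x) \<le> norm x * K"
    by (rule exI[of _ "norm y"]) (metis cmod_cinner_le mult.commute)
qed

lemma bounded_linear_scaleC: "bounded_linear (\<lambda>x::'a::complex_hilbert. c *\<^sub>C x)"
proof
  show "c *\<^sub>C (a + b) = c *\<^sub>C a + c *\<^sub>C b" for a b by (rule scaleC_add_right)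
  show "c *\<^sub>C (r *\<^sub>R a) = r *\<^sub>R (c *\<^sub>C a)" for r a
    by (metis mult.commute scaleC_of_real scaleC_scaleC)
  show "\<exists>K. \<forall>x. norm (c *\<^sub>C x) \<le> norm x * K"
    by (rule exI[of _ "cmod c"]) (simp add: mult.commute)
qed

lemma parallelogram_law:
  "(norm (x + y))\<^sup>2 + (norm (x - y))\<^sup>2 = 2 * (norm (x::'a::complex_hilbert))\<^sup>2 + 2 * (norm y)\<^sup>2"
  unfolding power2_norm_eq_cinner
  by (simp add: cinner_add_left cinner_add_right cinner_diff_left cinner_diff_right)

lemma infdist_less_imp_exists:
  assumes "A \<noteq> {}" "infdist x A < r"
  obtains a where "a \<in> A" "dist x a < r"
proof -
  have "bdd_below (dist x ` A)" by (rule bdd_belowI2[of _ 0]) simp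
  then show ?thesis
    using assms that unfolding infdist_notempty[OF assms(1)] by (auto simp: cINF_less_iff)
qed

text \<open>In the parallelogram law for \<open>x - a\<close> and \<open>x - b\<close>, the sum is twice the distance from \<open>x\<close>
  to the midpoint of \<open>a\<close> and \<open>b\<close>, which lies in \<open>Z\<close> and is therefore at least \<open>d\<close> away.\<close>

lemma convex_near_points_close:
  fixes Z :: "'a::complex_hilbert set"
  assumes "convex Z" "a \<in> Z" "b \<in> Z"
    and "norm (x - a) \<le> infdist x Z + s" "norm (x - b) \<le> infdist x Z + t"
    and "0 \<le> s" "s \<le> 1" "0 \<le> t" "t \<le> 1"
  shows "(norm (a - b))\<^sup>2 \<le> (4 * infdist x Z + 2) * (s + t)"
proof -
  define d where "d = infdist x Z"
  have d: "0 \<le> d" unfolding d_def by (rule infdist_nonneg)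
  have "(1/2::real) *\<^sub>R a + (1/2::real) *\<^sub>R b \<in> Z"
    using assms(1-3) by (rule convexD) auto
  then have "d \<le> norm (x - ((1/2::real) *\<^sub>R a + (1/2::real) *\<^sub>R b))"
    unfolding d_def using infdist_le by (metis dist_norm)
  moreover have "(x - a) + (x - b) = 2 *\<^sub>R (x - ((1/2::real) *\<^sub>R a + (1/2::real) *\<^sub>R b))"
    by (simp add: algebra_simps scaleR_2)
  ultimately have mid: "2 * d \<le> norm ((x - a) + (x - b))" by simp
  have "(norm (a - b))\<^sup>2
      = 2 * (norm (x - a))\<^sup>2 + 2 * (norm (x - b))\<^sup>2 - (norm ((x - a) + (x - b)))\<^sup>2"
    using parallelogram_law[of "x - a" "x - b"] by (simp add: norm_minus_commute)
  also have "\<dots> \<le> 2 * (d + s)\<^sup>2 + 2 * (d + t)\<^sup>2 - (2 * d)\<^sup>2"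
    using assms(4,5) mid d unfolding d_def[symmetric]
    by (intro diff_mono add_mono mult_left_mono power_mono) auto
  also have "\<dots> = 4 * d * (s + t) + 2 * s * s + 2 * t * t"
    by (simp add: power2_eq_square algebra_simps)
  also have "\<dots> \<le> (4 * d + 2) * (s + t)"
    using assms(6-9) mult_left_le[of s s] mult_left_le[of t t] by (simp add: algebra_simps)
  finally show ?thesis unfolding d_def .
qed

lemma convex_minimizing_sequence_Cauchy:
  fixes Z :: "'a::complex_hilbert set"
  assumes "convex Z" "\<And>m. k m \<in> Z" "\<And>m. norm (x - k m) \<le> infdist x Z + 1 / real (Suc m)"
  shows "Cauchy k"
proof (rule CauchyI)
  fix \<epsilon> :: real assume \<epsilon>: "\<epsilon> > 0"
  define d where "d = infdist x Z"
  have d: "0 \<le> d" unfolding d_def by (rule infdist_nonneg)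
  obtain M :: nat where M: "2 * (4 * d + 2) / \<epsilon>\<^sup>2 < real M"
    using reals_Archimedean2 by blast
  have "2 * (4 * d + 2) < \<epsilon>\<^sup>2 * real M"
    using M \<epsilon> by (simp add: divide_less_eq mult.commute)
  also have "\<dots> \<le> \<epsilon>\<^sup>2 * real (Suc M)" by (simp add: mult_left_mono)
  finally have bound: "(4 * d + 2) * (2 / real (Suc M)) < \<epsilon>\<^sup>2" by (simp add: field_simps)
  have "norm (k m - k p) < \<epsilon>" if "m \<ge> M" "p \<ge> M" for m p
  proof -
    have "(norm (k m - k p))\<^sup>2 \<le> (4 * d + 2) * (1 / real (Suc m) + 1 / real (Suc p))"
      unfolding d_def by (rule convex_near_points_close[OF assms(1,2,2,3,3)]) auto
    also have "\<dots> \<le> (4 * d + 2) * (2 / real (Suc M))"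
      using that d
      by (intro mult_left_mono)
        (simp_all add: frac_le add_mono[of _ "1 / real (Suc M)" _ "1 / real (Suc M)", simplified])
    also have "\<dots> < \<epsilon>\<^sup>2" by (rule bound)
    finally show ?thesis using \<epsilon> by (simp add: power_less_imp_less_base)
  qed
  then show "\<exists>M. \<forall>m\<ge>M. \<forall>n\<ge>M. norm (k m - k n) < \<epsilon>" by blast
qed

lemma convex_closest_point_exists:
  fixes Z :: "'a::complex_hilbert set"
  assumes "closed Z" "convex Z" "Z \<noteq> {}"
  obtains z where "z \<in> Z" "\<And>k. k \<in> Z \<Longrightarrow> norm (x - z) \<le> norm (x - k)"
proof -
  define d where "d = infdist x Z"
  have "\<exists>k\<in>Z. dist x k < d + 1 / real (Suc m)" for m
    using infdist_less_imp_exists[OF assms(3), of x "d + 1 / real (Suc m)"] unfolding d_def by auto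
  then obtain k where kZ: "\<And>m. k m \<in> Z" and kd: "\<And>m. norm (x - k m) < d + 1 / real (Suc m)"
    unfolding dist_norm by metis
  have "Cauchy k"
    by (rule convex_minimizing_sequence_Cauchy[OF assms(2) kZ]) (use kd d_def less_imp_le in blast)
  then obtain z where klim: "k \<longlonglongrightarrow> z"
    using Cauchy_convergent_iff convergent_def by blast
  have "norm (x - z) \<le> d"
  proof (rule LIMSEQ_le)
    show "(\<lambda>m. norm (x - k m)) \<longlonglongrightarrow> norm (x - z)"
      by (intro tendsto_intros klim)
    show "(\<lambda>m. d + 1 / real (Suc m)) \<longlonglongrightarrow> d"
      using tendsto_add[OF tendsto_const LIMSEQ_inverse_real_of_nat, of d]
        by (simp add: inverse_eq_divide)
    show "\<exists>N. \<forall>m\<ge>N. norm (x - k m) \<le> d + 1 / real (Suc m)" using kd less_imp_le by blast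
  qed
  moreover have "d \<le> norm (x - k)" if "k \<in> Z" for k
    unfolding d_def using infdist_le[OF that, of x] by (simp add: dist_norm)
  moreover have "z \<in> Z" using closed_sequentially[OF assms(1)] kZ klim by blast
  ultimately show ?thesis using that by fastforce
qed

text \<open>Expand \<open>\<parallel>z - t w\<parallel>\<^sup>2\<close> for \<open>t = s \<langle>w,z\<rangle>\<close> with a small \<open>s > 0\<close>: the first-order term
  \<open>-2 s |\<langle>z,w\<rangle>|\<^sup>2\<close> dominates unless it vanishes.\<close>

lemma cinner_eq_0_if_norm_le_norm_diff:
  fixes z w :: "'a::complex_hilbert"
  assumes "\<And>t. norm z \<le> norm (z - t *\<^sub>C w)"
  shows "cinner z w = 0"
proof -
  define a where "a = cinner z w"
  define s where "s = 1 / ((norm w)\<^sup>2 + 1)"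
  have pos: "0 < (norm w)\<^sup>2 + 1" by (simp add: add_nonneg_pos)
  then have s: "s > 0" "s * (norm w)\<^sup>2 < 1" unfolding s_def by (simp_all add: field_simps)
  define t where "t = complex_of_real s * cnj a"
  have aa: "a * cnj a = complex_of_real ((cmod a)\<^sup>2)" by (rule complex_norm_square[symmetric])
  have "cinner (z - t *\<^sub>C w) (z - t *\<^sub>C w)
      = cinner z z - t * a - cnj t * cnj a + cnj t * t * cinner w w"
    unfolding a_def
    by (subst (2) cinner_conj)
      (simp add: cinner_diff_left cinner_diff_right cinner_scaleC_left cinner_scaleC_right
        algebra_simps)
  also have "\<dots> = cinner z z - (2 * of_real s - of_real s * of_real s * cinner w w) * (a * cnj a)"
    unfolding t_def by (simp add: algebra_simps)
  also have "\<dots> = of_real ((norm z)\<^sup>2 - s * (cmod a)\<^sup>2 * (2 - s * (norm w)\<^sup>2))"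
    unfolding aa by (simp add: cinner_self algebra_simps)
  finally have "(norm (z - t *\<^sub>C w))\<^sup>2 = (norm z)\<^sup>2 - s * (cmod a)\<^sup>2 * (2 - s * (norm w)\<^sup>2)"
    by (simp only: cinner_self of_real_eq_iff)
  moreover have "(norm z)\<^sup>2 \<le> (norm (z - t *\<^sub>C w))\<^sup>2"
    using assms[of t] by (simp add: power_mono)
  ultimately have "s * (cmod a)\<^sup>2 * (2 - s * (norm w)\<^sup>2) \<le> 0" by linarith
  then have "(cmod a)\<^sup>2 \<le> 0"
    using s by (simp add: mult_le_0_iff zero_less_mult_iff)
  then show ?thesis unfolding a_def by simp
qed

lemma exists_orthogonal_to_kernel:
  fixes \<phi> :: "'a::complex_hilbert \<Rightarrow> complex"
  assumes add: "\<And>x y. \<phi> (x + y) = \<phi> x + \<phi> y"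
    and scale: "\<And>c x. \<phi> (c *\<^sub>C x) = c * \<phi> x"
    and bounded: "\<And>x. cmod (\<phi> x) \<le> K * norm x"
  obtains z where "\<phi> z = \<phi> x0" "\<And>w. \<phi> w = 0 \<Longrightarrow> cinner z w = 0"
proof -
  have "bounded_linear \<phi>"
  proof
    show "\<phi> (r *\<^sub>R a) = r *\<^sub>R \<phi> a" for r a
      using scale[of "complex_of_real r" a] by (simp add: scaleC_of_real scaleR_conv_of_real)
    show "\<exists>K. \<forall>x. cmod (\<phi> x) \<le> norm x * K" using bounded by (metis mult.commute)
  qed (rule add)
  then have lin: "linear \<phi>" by (rule bounded_linear.linear)
  define Z where "Z = {x. \<phi> x = 0}"
  have "closed Z" unfolding Z_def
    by (intro closed_Collect_eq continuous_on_const linear_continuous_on \<open>bounded_linear \<phi>\<close>)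
  moreover have "convex Z"
    unfolding Z_def convex_def by (simp add: linear_add[OF lin] linear_scale[OF lin])
  moreover have "0 \<in> Z" unfolding Z_def using linear_0[OF lin] by simp
  ultimately obtain z0 where z0: "z0 \<in> Z" "\<And>k. k \<in> Z \<Longrightarrow> norm (x0 - z0) \<le> norm (x0 - k)"
    using convex_closest_point_exists by blast
  show ?thesis
  proof (rule that)
    show "\<phi> (x0 - z0) = \<phi> x0" using z0(1) unfolding Z_def by (simp add: linear_diff[OF lin])
    fix w assume "\<phi> w = 0"
    show "cinner (x0 - z0) w = 0"
    proof (rule cinner_eq_0_if_norm_le_norm_diff)
      fix t
      have "z0 + t *\<^sub>C w \<in> Z"
        using z0(1) \<open>\<phi> w = 0\<close> unfolding Z_def by (simp add: add scale)
      then show "norm (x0 - z0) \<le> norm (x0 - z0 - t *\<^sub>C w)" using z0(2) by (simp add: algebra_simps)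
    qed
  qed
qed

theorem Riesz_representation:
  fixes \<phi> :: "'a::complex_hilbert \<Rightarrow> complex"
  assumes add: "\<And>x y. \<phi> (x + y) = \<phi> x + \<phi> y"
    and scale: "\<And>c x. \<phi> (c *\<^sub>C x) = c * \<phi> x"
    and bounded: "\<And>x. cmod (\<phi> x) \<le> K * norm x"
  obtains v where "\<And>x. \<phi> x = cinner v x"
proof (cases "\<forall>x. \<phi> x = 0")
  case True then show ?thesis using that[of 0] by simp
next
  case False
  then obtain x0 where x0: "\<phi> x0 \<noteq> 0" by blast
  obtain z where \<phi>z: "\<phi> z = \<phi> x0" and orth: "\<And>w. \<phi> w = 0 \<Longrightarrow> cinner z w = 0"
    using exists_orthogonal_to_kernel[OF add scale bounded] by blast
  have "\<phi> 0 = 0" using add[of 0 0] by simp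
  then have "z \<noteq> 0" using \<phi>z x0 by auto
  show ?thesis
  proof (rule that)
    fix x
    have "\<phi> (x - (\<phi> x / \<phi> z) *\<^sub>C z) = 0"
      using add[of "x - (\<phi> x / \<phi> z) *\<^sub>C z" "(\<phi> x / \<phi> z) *\<^sub>C z"] \<phi>z x0 by (simp add: scale)
    then have "cinner z (x - (\<phi> x / \<phi> z) *\<^sub>C z) = 0" by (rule orth)
    then have "cinner z x = (\<phi> x / \<phi> z) * complex_of_real ((norm z)\<^sup>2)"
      by (simp add: cinner_diff_right cinner_scaleC_right cinner_self)
    then show "\<phi> x = cinner ((cnj (\<phi> z) / complex_of_real ((norm z)\<^sup>2)) *\<^sub>C z) x"
      using \<open>z \<noteq> 0\<close> \<phi>z x0 by (simp add: cinner_scaleC_left field_simps)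
  qed
qed

lemma conjugate_Riesz_representation:
  fixes F :: "'a::complex_hilbert \<Rightarrow> complex"
  assumes "\<And>x y. F (x + y) = F x + F y" "\<And>c x. F (c *\<^sub>C x) = cnj c * F x"
    and "\<And>x. cmod (F x) \<le> K * norm x"
  obtains v where "\<And>y. F y = cinner y v"
proof -
  obtain v where "\<And>y. cnj (F y) = cinner v y"
    by (rule Riesz_representation[of "\<lambda>y. cnj (F y)" K]) (use assms in simp_all)
  then show ?thesis using that by (metis cinner_conj complex_cnj_cnj)
qed

section \<open>Bounded operators and adjoints\<close>

definition clinear_op :: "('a::complex_hilbert \<Rightarrow> 'a) \<Rightarrow> bool" where
  "clinear_op T \<longleftrightarrow> (\<forall>x y. T (x + y) = T x + T y) \<and> (\<forall>c x. T (c *\<^sub>C x) = c *\<^sub>C T x)"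

lemma clinear_op_add: "clinear_op T \<Longrightarrow> T (x + y) = T x + T y"
  unfolding clinear_op_def by blast

lemma clinear_op_scaleC: "clinear_op T \<Longrightarrow> T (c *\<^sub>C x) = c *\<^sub>C T x"
  unfolding clinear_op_def by blast

lemma clinear_op_zero: "clinear_op T \<Longrightarrow> T 0 = 0"
  using clinear_op_add[of T 0 0] by simp

lemma clinear_op_minus: "clinear_op T \<Longrightarrow> T (- x) = - T x"
  using clinear_op_add[of T x "-x"] clinear_op_zero[of T] by (simp add: minus_unique)

lemma clinear_op_diff: "clinear_op T \<Longrightarrow> T (x - y) = T x - T y"
  using clinear_op_add[of T x "-y"] clinear_op_minus[of T y] by simp

lemma clinear_op_sum: "clinear_op T \<Longrightarrow> T (\<Sum>i\<in>I. f i) = (\<Sum>i\<in>I. T (f i))"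
  by (induction I rule: infinite_finite_induct) (auto simp: clinear_op_add clinear_op_zero)

lemma clinear_op_comp: "clinear_op S \<Longrightarrow> clinear_op T \<Longrightarrow> clinear_op (\<lambda>x. S (T x))"
  unfolding clinear_op_def by simp

lemma clinear_op_funpow: "clinear_op T \<Longrightarrow> clinear_op (T ^^ k)"
  by (induction k) (auto simp: clinear_op_def)

lemma bounded_op_clinear_op: "bounded_op T \<Longrightarrow> clinear_op T"
  unfolding bounded_op_def clinear_op_def by blast

lemma bounded_opI: "clinear_op T \<Longrightarrow> (\<And>x. norm (T x) \<le> K * norm x) \<Longrightarrow> bounded_op T"
  unfolding bounded_op_def clinear_op_def by (metis mult.commute)

lemma bounded_op_pos_bound:
  assumes "bounded_op T"
  obtains K where "K > 0" "\<And>x. norm (T x) \<le> K * norm x"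
proof -
  obtain K where K: "\<And>x. norm (T x) \<le> norm x * K" using assms unfolding bounded_op_def by blast
  have "norm (T x) \<le> max K 1 * norm x" for x
    using K[of x] by (metis max.cobounded1 mult.commute mult_left_mono norm_ge_zero order_trans)
  then show ?thesis using that[of "max K 1"] by simp
qed

lemma bounded_op_bounded_linear: "bounded_op T \<Longrightarrow> bounded_linear T"
  unfolding bounded_op_def
  by (metis bounded_linear_intro scaleC_of_real)

lemma bounded_op_comp: "bounded_op S \<Longrightarrow> bounded_op T \<Longrightarrow> bounded_op (\<lambda>x. S (T x))"
proof -
  assume S: "bounded_op S" and T: "bounded_op T"
  obtain K1 where K1: "K1 > 0" "\<And>x. norm (S x) \<le> K1 * norm x"
    using bounded_op_pos_bound[OF S] by blast
  obtain K2 where K2: "\<And>x. norm (T x) \<le> K2 * norm x"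
    using bounded_op_pos_bound[OF T] by blast
  show ?thesis
  proof (rule bounded_opI[where K="K1 * K2"])
    show "clinear_op (\<lambda>x. S (T x))" using clinear_op_comp bounded_op_clinear_op S T by blast
    show "norm (S (T x)) \<le> K1 * K2 * norm x" for x
      using order_trans[OF K1(2) mult_left_mono[OF K2 less_imp_le[OF K1(1)]]]
        by (simp add: mult.assoc)
  qed
qed

lemma bounded_op_funpow: "bounded_op T \<Longrightarrow> bounded_op (T ^^ k)"
proof (induction k)
  case 0 then show ?case by (auto intro: bounded_opI[where K=1] simp: clinear_op_def)
next
  case (Suc k) then show ?case using bounded_op_comp[of T "T ^^ k"] by (simp add: o_def)
qed

lemma bounded_op_shift_op: "bounded_op A \<Longrightarrow> bounded_op (shift_op \<mu> A)"
proof -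
  assume A: "bounded_op A"
  obtain K where K: "\<And>x. norm (A x) \<le> K * norm x" using bounded_op_pos_bound[OF A] by blast
  show ?thesis
  proof (rule bounded_opI[where K="cmod \<mu> + K"])
    show "clinear_op (shift_op \<mu> A)" unfolding clinear_op_def shift_op_def
      using bounded_op_clinear_op[OF A]
      by (simp add: clinear_op_add clinear_op_scaleC scaleC_add_right scaleC_scaleC
          scaleC_diff_right mult.commute)
    show "norm (shift_op \<mu> A x) \<le> (cmod \<mu> + K) * norm x" for x
      using norm_triangle_ineq4[of "\<mu> *\<^sub>C x" "A x"] K[of x] unfolding shift_op_def
      by (simp add: distrib_right)
  qed
qed

lemma sum_power_shift_op:
  assumes "clinear_op X"
  shows "(\<Sum>j<n. \<mu> ^ (n - 1 - j) *\<^sub>C (X ^^ j) (shift_op \<mu> X w)) = shift_op (\<mu> ^ n) (X ^^ n) w"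
proof (induction n)
  case (Suc n)
  have Xn: "clinear_op (X ^^ n)" by (rule clinear_op_funpow[OF assms])
  have "(\<Sum>j<Suc n. \<mu> ^ (Suc n - 1 - j) *\<^sub>C (X ^^ j) (shift_op \<mu> X w))
      = \<mu> *\<^sub>C (\<Sum>j<n. \<mu> ^ (n - 1 - j) *\<^sub>C (X ^^ j) (shift_op \<mu> X w)) + (X ^^ n) (shift_op \<mu> X w)"
    unfolding scaleC_sum_right
    by (simp add: scaleC_scaleC Suc_diff_Suc flip: power_Suc)
  also have "\<dots> = shift_op (\<mu> ^ Suc n) (X ^^ Suc n) w"
    unfolding Suc.IH
    by (simp add: shift_op_def clinear_op_diff[OF Xn] clinear_op_scaleC[OF Xn] funpow_swap1
        scaleC_diff_right scaleC_scaleC)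
  finally show ?case .
qed (simp add: shift_op_def)

lemma adjoint_exists:
  assumes "bounded_op T"
  obtains S where "\<And>x y. cinner (T x) y = cinner x (S y)"
proof -
  obtain K where K: "\<And>x. norm (T x) \<le> K * norm x" using bounded_op_pos_bound[OF assms] by blast
  have T: "clinear_op T" using assms by (rule bounded_op_clinear_op)
  have "\<exists>v. \<forall>x. cinner (T x) y = cinner x v" for y
  proof -
    obtain v where v: "\<And>x. cinner y (T x) = cinner v x"
    proof (rule Riesz_representation[where K="norm y * K"])
      show "cinner y (T (a + b)) = cinner y (T a) + cinner y (T b)" for a b
        by (simp add: clinear_op_add[OF T] cinner_add_right)
      show "cinner y (T (c *\<^sub>C a)) = c * cinner y (T a)" for c a
        by (simp add: clinear_op_scaleC[OF T] cinner_scaleC_right)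
      show "cmod (cinner y (T a)) \<le> norm y * K * norm a" for a
        using order_trans[OF cmod_cinner_le mult_left_mono[OF K norm_ge_zero]]
          by (simp add: mult.assoc)
    qed blast
    then show ?thesis by (metis cinner_conj)
  qed
  then show ?thesis using that by metis
qed

lemma cadjoint_eqI:
  assumes "\<And>x y. cinner (T x) y = cinner x (S y)"
  shows "cadjoint T = S"
  unfolding cadjoint_def
proof (rule the_equality)
  fix S' assume S': "\<forall>x y. cinner (T x) y = cinner x (S' y)"
  show "S' = S"
  proof (rule ext, rule cinner_eq_cinner_right_imp_eq)
    show "cinner x (S' y) = cinner x (S y)" for x y using S' assms by metis
  qed
qed (use assms in blast)

lemma cinner_cadjoint: "bounded_op T \<Longrightarrow> cinner (T x) y = cinner x (cadjoint T y)"
  by (metis adjoint_exists cadjoint_eqI)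

lemma cinner_cadjoint_left: "bounded_op T \<Longrightarrow> cinner (cadjoint T y) x = cinner y (T x)"
  by (metis cinner_cadjoint cinner_conj)

lemma clinear_op_cadjoint:
  assumes "bounded_op T"
  shows "clinear_op (cadjoint T)"
  unfolding clinear_op_def
  by (intro conjI allI; rule cinner_eq_cinner_right_imp_eq)
    (simp_all add: cinner_cadjoint[OF assms, symmetric] cinner_add_right cinner_scaleC_right)

lemma cadjoint_funpow:
  assumes "bounded_op T"
  shows "cadjoint (T ^^ k) = cadjoint T ^^ k"
proof (rule cadjoint_eqI)
  show "cinner ((T ^^ k) x) y = cinner x ((cadjoint T ^^ k) y)" for x y
  proof (induction k arbitrary: y)
    case (Suc k)
    have "cinner ((T ^^ Suc k) x) y = cinner ((T ^^ k) x) (cadjoint T y)"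
      by (simp add: cinner_cadjoint[OF assms])
    also have "\<dots> = cinner x ((cadjoint T ^^ Suc k) y)"
      by (simp add: Suc.IH funpow_swap1)
    finally show ?case .
  qed simp
qed

lemma cadjoint_shift_op:
  assumes "bounded_op T"
  shows "cadjoint (shift_op \<mu> T) = shift_op (cnj \<mu>) (cadjoint T)"
  by (rule cadjoint_eqI)
    (simp add: shift_op_def cinner_diff_left cinner_diff_right cinner_scaleC_left
      cinner_scaleC_right cinner_cadjoint[OF assms])

section \<open>Normal operators\<close>

definition normal_op :: "('a::complex_hilbert \<Rightarrow> 'a) \<Rightarrow> bool" where
  "normal_op N \<longleftrightarrow> (\<forall>x. cadjoint N (N x) = N (cadjoint N x))"

lemma normal_op_funpowI:
  assumes "bounded_op A" "cadjoint A \<circ> (A ^^ n) = (A ^^ n) \<circ> cadjoint A"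
  shows "normal_op (A ^^ n)"
proof -
  have "(cadjoint A ^^ k) ((A ^^ n) x) = (A ^^ n) ((cadjoint A ^^ k) x)" for k x
    using fun_cong[OF assms(2)] by (induction k) simp_all
  then show ?thesis unfolding normal_op_def cadjoint_funpow[OF assms(1)] by blast
qed

lemma normal_op_shift_op:
  assumes "bounded_op N" "normal_op N"
  shows "normal_op (shift_op \<mu> N)"
proof -
  have N: "clinear_op N" and N': "clinear_op (cadjoint N)"
    using assms(1) by (simp_all add: bounded_op_clinear_op clinear_op_cadjoint)
  show ?thesis
    using assms(2)
    unfolding normal_op_def cadjoint_shift_op[OF assms(1)]
    by (simp add: shift_op_def clinear_op_diff[OF N] clinear_op_diff[OF N'] clinear_op_scaleC[OF N]
        clinear_op_scaleC[OF N'] scaleC_diff_right scaleC_scaleC mult.commute algebra_simps)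
qed

lemma norm_cadjoint_normal_op:
  assumes "bounded_op N" "normal_op N"
  shows "norm (cadjoint N x) = norm (N x)"
proof -
  have "cinner (cadjoint N x) (cadjoint N x) = cnj (cinner x (cadjoint N (N x)))"
    using assms by (metis cinner_cadjoint cinner_conj normal_op_def)
  also have "\<dots> = cinner (N x) (N x)"
    using assms(1) by (metis cinner_cadjoint cinner_conj)
  finally have "(norm (cadjoint N x))\<^sup>2 = (norm (N x))\<^sup>2"
    by (simp only: cinner_self of_real_eq_iff)
  then show ?thesis by (simp add: power2_eq_iff_nonneg)
qed

lemma normal_op_power2_norm_le:
  assumes "bounded_op N" "normal_op N"
  shows "(norm (N w))\<^sup>2 \<le> norm (N (N w)) * norm w"
proof -
  have "(norm (N w))\<^sup>2 = Re (cinner w (cadjoint N (N w)))"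
    by (simp add: power2_norm_eq_cinner cinner_cadjoint[OF assms(1)])
  also have "\<dots> \<le> norm w * norm (cadjoint N (N w))"
    using complex_Re_le_cmod cmod_cinner_le order_trans by blast
  finally show ?thesis by (simp add: norm_cadjoint_normal_op[OF assms] mult.commute)
qed

text \<open>By the previous lemma the ratios \<open>\<parallel>N\<^sup>k\<^sup>+\<^sup>1 v\<parallel> / \<parallel>N\<^sup>k v\<parallel>\<close> increase with \<open>k\<close>.\<close>

lemma normal_op_norm_funpow_ge:
  assumes "bounded_op N" "normal_op N" and Nv: "N v \<noteq> 0"
  shows "(norm (N v) / norm v) ^ k * norm v \<le> norm ((N ^^ k) v)"
proof -
  define r where "r = norm (N v) / norm v"
  have v: "v \<noteq> 0" using Nv clinear_op_zero[OF bounded_op_clinear_op[OF assms(1)]] by auto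
  then have r: "r > 0" unfolding r_def using Nv by simp
  have "r ^ k * norm v \<le> norm ((N ^^ k) v) \<and> r * norm ((N ^^ k) v) \<le> norm ((N ^^ Suc k) v)"
  proof (induction k)
    case 0 then show ?case unfolding r_def using v by simp
  next
    case (Suc k)
    have "r ^ Suc k * norm v \<le> r * norm ((N ^^ k) v)"
      using Suc r by (simp add: mult.assoc)
    then have ge: "r ^ Suc k * norm v \<le> norm ((N ^^ Suc k) v)"
      using Suc by linarith
    have "0 < r ^ k * norm v" using r v by simp
    then have pos: "norm ((N ^^ k) v) > 0" using Suc by linarith
    have "r * norm ((N ^^ Suc k) v) * norm ((N ^^ k) v) \<le> (norm ((N ^^ Suc k) v))\<^sup>2"
      using mult_right_mono[OF conjunct2[OF Suc] norm_ge_zero[of "(N ^^ Suc k) v"]]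
      by (simp add: power2_eq_square mult_ac)
    also have "\<dots> \<le> norm ((N ^^ Suc (Suc k)) v) * norm ((N ^^ k) v)"
      using normal_op_power2_norm_le[OF assms(1,2), of "(N ^^ k) v"] by simp
    finally show ?case using ge pos by (simp add: mult_le_cancel_right)
  qed
  then show ?thesis unfolding r_def by blast
qed

section \<open>The resolvent\<close>

lemma resolvent:
  assumes "\<mu> \<notin> op_spectrum A"
  shows bounded_op_resolvent: "bounded_op (resolvent A \<mu>)"
    and resolvent_shift_op: "resolvent A \<mu> (shift_op \<mu> A x) = x"
    and shift_op_resolvent: "shift_op \<mu> A (resolvent A \<mu> x) = x"
proof -
  from assms obtain B where B: "bounded_op B" "B \<circ> shift_op \<mu> A = id" "shift_op \<mu> A \<circ> B = id"
    unfolding op_spectrum_def invertible_op_def by blast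
  have "\<exists>!B. bounded_op B \<and> B \<circ> shift_op \<mu> A = id \<and> shift_op \<mu> A \<circ> B = id"
  proof (rule ex1I[of _ B])
    fix B' assume "bounded_op B' \<and> B' \<circ> shift_op \<mu> A = id \<and> shift_op \<mu> A \<circ> B' = id"
    then have B': "\<And>x. B' (shift_op \<mu> A x) = x" by (simp add: fun_eq_iff)
    show "B' = B"
    proof
      fix x
      show "B' x = B x" using B'[of "B x"] B(3) by (simp add: fun_eq_iff)
    qed
  qed (use B in blast)
  then have "bounded_op (resolvent A \<mu>) \<and> resolvent A \<mu> \<circ> shift_op \<mu> A = id
      \<and> shift_op \<mu> A \<circ> resolvent A \<mu> = id"
    unfolding resolvent_def by (rule theI')
  then show "bounded_op (resolvent A \<mu>)" "resolvent A \<mu> (shift_op \<mu> A x) = x"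
    "shift_op \<mu> A (resolvent A \<mu> x) = x"
    by (auto simp: fun_eq_iff)
qed

lemma clinear_op_resolvent: "\<mu> \<notin> op_spectrum A \<Longrightarrow> clinear_op (resolvent A \<mu>)"
  by (rule bounded_op_clinear_op[OF bounded_op_resolvent])

lemma resolvent_eqI:
  assumes "bounded_op B" "\<And>x. B (shift_op \<mu> A x) = x" "\<And>x. shift_op \<mu> A (B x) = x"
  shows resolvent_eqI_not_in_spectrum: "\<mu> \<notin> op_spectrum A" and "resolvent A \<mu> = B"
proof -
  show \<mu>: "\<mu> \<notin> op_spectrum A" unfolding op_spectrum_def invertible_op_def
    using assms by (auto simp: fun_eq_iff)
  show "resolvent A \<mu> = B"
  proof
    fix x
    show "resolvent A \<mu> x = B x" using resolvent_shift_op[OF \<mu>, of "B x"] assms(3) by simp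
  qed
qed

lemma funpow_geometric_bound:
  fixes E :: "'a::banach \<Rightarrow> 'a"
  assumes bound: "\<And>x. norm (E x) \<le> c * norm x" and c: "0 \<le> c" "c < 1"
  shows summable_norm_funpow: "summable (\<lambda>k. norm ((E ^^ k) x))"
    and norm_suminf_funpow_le: "norm (\<Sum>k. (E ^^ k) x) \<le> norm x / (1 - c)"
proof -
  have pow: "norm ((E ^^ k) x) \<le> c ^ k * norm x" for k
  proof (induction k)
    case (Suc k)
    have "norm ((E ^^ Suc k) x) \<le> c * norm ((E ^^ k) x)" using bound[of "(E ^^ k) x"] by simp
    also have "\<dots> \<le> c * (c ^ k * norm x)" using Suc c(1) by (rule mult_left_mono)
    finally show ?case by simp
  qed simp
  have geom: "summable (\<lambda>k. c ^ k * norm x)"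
    using c by (intro summable_mult2 summable_geometric) simp
  show summ: "summable (\<lambda>k. norm ((E ^^ k) x))"
    by (rule summable_comparison_test[OF _ geom]) (use pow in auto)
  have "norm (\<Sum>k. (E ^^ k) x) \<le> (\<Sum>k. c ^ k * norm x)"
    using order_trans[OF summable_norm[OF summ] suminf_le[OF pow summ geom]] .
  also have "\<dots> = norm x / (1 - c)"
    using suminf_mult2[OF summable_geometric[of c], of "norm x"] suminf_geometric[of c] c by simp
  finally show "norm (\<Sum>k. (E ^^ k) x) \<le> norm x / (1 - c)" .
qed

lemma Neumann_series:
  fixes E :: "'a::complex_hilbert \<Rightarrow> 'a"
  assumes E: "clinear_op E" and bound: "\<And>x. norm (E x) \<le> c * norm x" and c: "0 \<le> c" "c < 1"
  obtains S where "clinear_op S" "\<And>x. norm (S x) \<le> norm x / (1 - c)"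
    "\<And>x. S x - E (S x) = x" "\<And>x. S (x - E x) = x"
proof
  define S where "S x = (\<Sum>k. (E ^^ k) x)" for x
  have Ek: "clinear_op (E ^^ k)" for k by (rule clinear_op_funpow[OF E])
  have summ: "summable (\<lambda>k. (E ^^ k) x)" for x
    by (rule summable_norm_cancel[OF summable_norm_funpow[OF bound c]])
  have shift: "(\<Sum>k. (E ^^ Suc k) x) = S x - x" for x
    unfolding S_def using suminf_split_head[OF summ[of x]] by simp
  show "clinear_op S" unfolding clinear_op_def S_def
    by (simp add: clinear_op_add[OF Ek] clinear_op_scaleC[OF Ek] suminf_add[OF summ summ]
        bounded_linear.suminf[OF bounded_linear_scaleC summ])
  show "norm (S x) \<le> norm x / (1 - c)" for x
    unfolding S_def by (rule norm_suminf_funpow_le[OF bound c])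
  show "S x - E (S x) = x" for x
  proof -
    have "E (S x) = (\<Sum>k. (E ^^ Suc k) x)" unfolding S_def
      using bounded_linear.suminf[OF bounded_op_bounded_linear[OF bounded_opI[OF E bound]] summ]
      by simp
    then show ?thesis using shift[of x] by simp
  qed
  show "S (x - E x) = x" for x
  proof -
    have "summable (\<lambda>k. (E ^^ Suc k) x)"
      using summable_Suc_iff[of "\<lambda>k. (E ^^ k) x"] summ[of x] by simp
    then have "S (x - E x) = S x - (\<Sum>k. (E ^^ Suc k) x)"
      unfolding S_def by (simp add: clinear_op_diff[OF Ek] funpow_swap1 suminf_diff[OF summ])
    then show ?thesis using shift[of x] by simp
  qed
qed

text \<open>\<open>\<mu> - A = (\<nu> - A)(1 - E)\<close> with \<open>E = (\<nu> - \<mu>) (\<nu> - A)\<^sup>-\<^sup>1\<close> of norm at most \<open>1/2\<close>,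
  which is inverted by the Neumann series.\<close>

lemma resolvent_perturbation:
  assumes A: "bounded_op A" and \<nu>: "\<nu> \<notin> op_spectrum A"
    and K: "K > 0" "\<And>x. norm (resolvent A \<nu> x) \<le> K * norm x"
    and \<mu>: "cmod (\<mu> - \<nu>) \<le> 1 / (2 * K)"
  shows "\<mu> \<notin> op_spectrum A" and "norm (resolvent A \<mu> x) \<le> 2 * K * norm x"
proof -
  define R where "R = resolvent A \<nu>"
  have R: "clinear_op R" unfolding R_def by (rule clinear_op_resolvent[OF \<nu>])
  have shift: "clinear_op (shift_op \<nu> A)"
    by (rule bounded_op_clinear_op[OF bounded_op_shift_op[OF A]])
  define E where "E x = (\<nu> - \<mu>) *\<^sub>C R x" for x
  have E: "clinear_op E" unfolding clinear_op_def E_def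
    by (simp add: clinear_op_add[OF R] clinear_op_scaleC[OF R] scaleC_add_right scaleC_scaleC
        mult.commute)
  have "norm (E x) \<le> (1 / (2 * K)) * (K * norm x)" for x
    unfolding E_def R_def norm_scaleC norm_minus_commute[of \<nu> \<mu>]
    by (rule mult_mono[OF \<mu> K(2)]) (use K(1) in auto)
  then have half: "norm (E x) \<le> (1/2) * norm x" for x using K(1) by simp
  obtain S where S: "clinear_op S" "\<And>x. norm (S x) \<le> norm x / (1 - 1/2)"
    "\<And>x. S x - E (S x) = x" "\<And>x. S (x - E x) = x"
    by (rule Neumann_series[OF E half]) auto
  have factor: "shift_op \<mu> A y = shift_op \<nu> A (y - E y)" for y
    unfolding E_def R_def using shift_op_resolvent[OF \<nu>]
    by (simp add: clinear_op_diff[OF shift] clinear_op_scaleC[OF shift])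
      (simp add: shift_op_def scaleC_diff_left algebra_simps)
  define B where "B x = S (R x)" for x
  have B_bound: "norm (B x) \<le> 2 * K * norm x" for x
  proof -
    have "norm (B x) \<le> 2 * norm (R x)" unfolding B_def using S(2)[of "R x"] by simp
    also have "\<dots> \<le> 2 * (K * norm x)" using K(2)[of x] unfolding R_def by simp
    finally show ?thesis by simp
  qed
  have B: "bounded_op B" unfolding B_def
    by (rule bounded_opI[OF clinear_op_comp[OF S(1) R] B_bound[unfolded B_def]])
  have B1: "B (shift_op \<mu> A x) = x" for x
    unfolding B_def factor R_def resolvent_shift_op[OF \<nu>] by (rule S(4))
  have B2: "shift_op \<mu> A (B x) = x" for x
    unfolding B_def factor S(3) R_def by (rule shift_op_resolvent[OF \<nu>])
  show "\<mu> \<notin> op_spectrum A" by (rule resolvent_eqI_not_in_spectrum[OF B B1 B2])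
  show "norm (resolvent A \<mu> x) \<le> 2 * K * norm x"
    unfolding resolvent_eqI(2)[OF B B1 B2] by (rule B_bound)
qed

lemma resolvent_locally_bounded:
  assumes A: "bounded_op A" and \<nu>: "\<nu> \<notin> op_spectrum A"
  obtains d M where "d > 0" "M > 0"
    "\<And>\<mu>. cmod (\<mu> - \<nu>) < d \<Longrightarrow> \<mu> \<notin> op_spectrum A"
    "\<And>\<mu> x. cmod (\<mu> - \<nu>) < d \<Longrightarrow> norm (resolvent A \<mu> x) \<le> M * norm x"
proof -
  obtain K where K: "K > 0" "\<And>x. norm (resolvent A \<nu> x) \<le> K * norm x"
    using bounded_op_pos_bound[OF bounded_op_resolvent[OF \<nu>]] by blast
  show ?thesis
  proof (rule that[of "1 / (2 * K)" "2 * K"])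
    fix \<mu> x assume "cmod (\<mu> - \<nu>) < 1 / (2 * K)"
    then have close: "cmod (\<mu> - \<nu>) \<le> 1 / (2 * K)" by simp
    show "\<mu> \<notin> op_spectrum A" by (rule resolvent_perturbation(1)[OF A \<nu> K close])
    show "norm (resolvent A \<mu> x) \<le> 2 * K * norm x"
      by (rule resolvent_perturbation(2)[OF A \<nu> K close])
  qed (use K(1) in auto)
qed

lemma resolvent_identity:
  assumes \<mu>: "\<mu> \<notin> op_spectrum A" and \<nu>: "\<nu> \<notin> op_spectrum A"
  shows "resolvent A \<mu> x - resolvent A \<nu> x = (\<nu> - \<mu>) *\<^sub>C resolvent A \<mu> (resolvent A \<nu> x)"
proof -
  define y where "y = resolvent A \<nu> x"
  have "x = shift_op \<mu> A y + (\<nu> - \<mu>) *\<^sub>C y"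
    using shift_op_resolvent[OF \<nu>, of x] unfolding y_def
    by (simp add: shift_op_def scaleC_diff_left algebra_simps)
  then have "resolvent A \<mu> x = y + (\<nu> - \<mu>) *\<^sub>C resolvent A \<mu> y"
    by (simp add: clinear_op_add[OF clinear_op_resolvent[OF \<mu>]]
        clinear_op_scaleC[OF clinear_op_resolvent[OF \<mu>]] resolvent_shift_op[OF \<mu>])
  then show ?thesis unfolding y_def by simp
qed

lemma shift_op_funpow_resolvent:
  assumes "bounded_op A" "\<mu> \<notin> op_spectrum A"
  shows "shift_op \<beta> (A ^^ n) (resolvent A \<mu> x)
    = (\<beta> - \<mu> ^ n) *\<^sub>C resolvent A \<mu> x + (\<Sum>j<n. \<mu> ^ (n - 1 - j) *\<^sub>C (A ^^ j) x)"
  using sum_power_shift_op[OF bounded_op_clinear_op[OF assms(1)],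
      where n=n and \<mu>=\<mu> and w="resolvent A \<mu> x"]
  unfolding shift_op_resolvent[OF assms(2)]
    by (simp add: shift_op_def scaleC_diff_left algebra_simps)

lemma cinner_resolvent_adjoint_eigenvector:
  assumes A: "bounded_op A" and u: "cadjoint A u = cnj l *\<^sub>C u" and \<mu>: "\<mu> \<notin> op_spectrum A"
  shows "cinner u x = (\<mu> - l) * cinner u (resolvent A \<mu> x)"
proof -
  have "cinner u (A v) = l * cinner u v" for v
    using cinner_cadjoint_left[OF A, of u v] by (simp add: u cinner_scaleC_left)
  then show ?thesis
    using shift_op_resolvent[OF \<mu>, of x]
    by (metis (no_types, lifting) cinner_diff_right cinner_scaleC_right left_diff_distrib
        shift_op_def)
qed

lemma adjoint_eigenvector_eq_0:
  assumes "bounded_op A" "cadjoint A u = cnj \<mu> *\<^sub>C u" "\<mu> \<notin> op_spectrum A"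
  shows "u = 0"
  using cinner_resolvent_adjoint_eigenvector[OF assms, of u] by (simp add: cinner_self)

lemma open_resolvent_set: "bounded_op A \<Longrightarrow> open (- op_spectrum A)"
  unfolding open_dist dist_norm
proof
  fix \<nu> assume A: "bounded_op A" and "\<nu> \<in> - op_spectrum A"
  then have "\<nu> \<notin> op_spectrum A" by simp
  then obtain d M where "d > 0" "M > 0" "\<And>\<mu>. cmod (\<mu> - \<nu>) < d \<Longrightarrow> \<mu> \<notin> op_spectrum A"
    "\<And>\<mu> x. cmod (\<mu> - \<nu>) < d \<Longrightarrow> norm (resolvent A \<mu> x) \<le> M * norm x"
    using resolvent_locally_bounded[OF A] by blast
  then show "\<exists>e>0. \<forall>\<mu>. cmod (\<mu> - \<nu>) < e \<longrightarrow> \<mu> \<in> - op_spectrum A" by blast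
qed

lemma tendsto_resolvent:
  assumes A: "bounded_op A" and \<nu>: "\<nu> \<notin> op_spectrum A"
  shows "((\<lambda>\<mu>. resolvent A \<mu> z) \<longlongrightarrow> resolvent A \<nu> z) (at \<nu>)"
proof -
  obtain d M where d: "d > 0" "M > 0" and \<mu>: "\<And>\<mu>. cmod (\<mu> - \<nu>) < d \<Longrightarrow> \<mu> \<notin> op_spectrum A"
    and M: "\<And>\<mu> x. cmod (\<mu> - \<nu>) < d \<Longrightarrow> norm (resolvent A \<mu> x) \<le> M * norm x"
    using resolvent_locally_bounded[OF A \<nu>] by blast
  have "\<forall>\<^sub>F \<mu> in at \<nu>.
      norm (resolvent A \<mu> z - resolvent A \<nu> z) \<le> cmod (\<mu> - \<nu>) * (M * norm (resolvent A \<nu> z))"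
    unfolding eventually_at dist_norm
  proof (intro exI[of _ d] conjI ballI impI)
    fix \<mu> assume "\<mu> \<in> UNIV" "\<mu> \<noteq> \<nu> \<and> cmod (\<mu> - \<nu>) < d"
    then have "\<mu> \<notin> op_spectrum A" "cmod (\<mu> - \<nu>) < d" using \<mu> by auto
    then have "norm (resolvent A \<mu> z - resolvent A \<nu> z)
        = cmod (\<mu> - \<nu>) * norm (resolvent A \<mu> (resolvent A \<nu> z))"
      "norm (resolvent A \<mu> (resolvent A \<nu> z)) \<le> M * norm (resolvent A \<nu> z)"
      using resolvent_identity[OF _ \<nu>] M by (simp_all add: norm_minus_commute)
    then show "norm (resolvent A \<mu> z - resolvent A \<nu> z)
        \<le> cmod (\<mu> - \<nu>) * (M * norm (resolvent A \<nu> z))"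
      by (simp add: mult_left_mono)
  qed (rule d)
  moreover have "((\<lambda>\<mu>. cmod (\<mu> - \<nu>) * (M * norm (resolvent A \<nu> z))) \<longlongrightarrow> 0) (at \<nu>)"
    by (intro tendsto_mult_left_zero tendsto_norm_zero LIM_zero tendsto_ident_at)
  ultimately have "((\<lambda>\<mu>. resolvent A \<mu> z - resolvent A \<nu> z) \<longlongrightarrow> 0) (at \<nu>)"
    by (rule Lim_null_comparison)
  then show ?thesis by (simp add: LIM_zero_iff)
qed

lemma continuous_on_resolvent:
  assumes "bounded_op A"
  shows "continuous_on (- op_spectrum A) (\<lambda>\<mu>. resolvent A \<mu> z)"
  by (rule continuous_at_imp_continuous_on)
    (auto simp: isCont_def intro: tendsto_resolvent[OF assms])

lemma has_field_derivative_cinner_resolvent: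
  assumes A: "bounded_op A" and \<nu>: "\<nu> \<notin> op_spectrum A"
  shows "((\<lambda>\<mu>. cinner y (resolvent A \<mu> x)) has_field_derivative
           - cinner y (resolvent A \<nu> (resolvent A \<nu> x))) (at \<nu>)"
  unfolding has_field_derivative_iff
proof (rule Lim_transform_eventually)
  show "((\<lambda>\<mu>. - cinner y (resolvent A \<mu> (resolvent A \<nu> x))) \<longlongrightarrow>
      - cinner y (resolvent A \<nu> (resolvent A \<nu> x))) (at \<nu>)"
    by (intro tendsto_minus bounded_linear.tendsto[OF bounded_linear_cinner_right]
        tendsto_resolvent[OF A \<nu>])
  obtain d M where "d > 0" "M > 0" and d: "\<And>\<mu>. cmod (\<mu> - \<nu>) < d \<Longrightarrow> \<mu> \<notin> op_spectrum A"
    and "\<And>\<mu> z. cmod (\<mu> - \<nu>) < d \<Longrightarrow> norm (resolvent A \<mu> z) \<le> M * norm z"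
    using resolvent_locally_bounded[OF A \<nu>] by blast
  show "\<forall>\<^sub>F \<mu> in at \<nu>. - cinner y (resolvent A \<mu> (resolvent A \<nu> x)) =
      (cinner y (resolvent A \<mu> x) - cinner y (resolvent A \<nu> x)) / (\<mu> - \<nu>)"
    unfolding eventually_at dist_norm
  proof (intro exI[of _ d] conjI ballI impI)
    fix \<mu> assume "\<mu> \<in> UNIV" "\<mu> \<noteq> \<nu> \<and> cmod (\<mu> - \<nu>) < d"
    then have "\<mu> \<noteq> \<nu>" "\<mu> \<notin> op_spectrum A" using d by auto
    have "cinner y (resolvent A \<mu> x) - cinner y (resolvent A \<nu> x)
        = (\<nu> - \<mu>) * cinner y (resolvent A \<mu> (resolvent A \<nu> x))"
      unfolding cinner_diff_right[symmetric] resolvent_identity[OF \<open>\<mu> \<notin> op_spectrum A\<close> \<nu>]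
      by (rule cinner_scaleC_right)
    then show "- cinner y (resolvent A \<mu> (resolvent A \<nu> x)) =
        (cinner y (resolvent A \<mu> x) - cinner y (resolvent A \<nu> x)) / (\<mu> - \<nu>)"
      using \<open>\<mu> \<noteq> \<nu>\<close> by (simp add: field_simps)
  qed (rule \<open>d > 0\<close>)
qed

lemma holomorphic_on_cinner_resolvent:
  assumes "bounded_op A"
  shows "(\<lambda>\<mu>. cinner y (resolvent A \<mu> x)) holomorphic_on (- op_spectrum A)"
  using has_field_derivative_cinner_resolvent[OF assms]
    holomorphic_on_open[OF open_resolvent_set[OF assms]]
  by blast

lemma resolvent_bounded_on_compact:
  assumes "bounded_op A" "compact K" "K \<subseteq> - op_spectrum A"
  obtains M where "\<And>\<mu>. \<mu> \<in> K \<Longrightarrow> norm (resolvent A \<mu> x) \<le> M"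
proof -
  have "continuous_on K (\<lambda>\<mu>. resolvent A \<mu> x)"
    using continuous_on_subset[OF continuous_on_resolvent[OF assms(1)] assms(3)] .
  then have "compact ((\<lambda>\<mu>. resolvent A \<mu> x) ` K)"
    using assms(2) by (rule compact_continuous_image)
  then have "bounded ((\<lambda>\<mu>. resolvent A \<mu> x) ` K)" by (rule compact_imp_bounded)
  then obtain M where M: "\<forall>y\<in>(\<lambda>\<mu>. resolvent A \<mu> x) ` K. norm y \<le> M"
    unfolding bounded_iff by blast
  show ?thesis
  proof (rule that)
    show "norm (resolvent A \<mu> x) \<le> M" if "\<mu> \<in> K" for \<mu> using M that by simp
  qed
qed

section \<open>Contour integrals around an isolated singularity\<close>

lemma closure_connected_component_Int_open:
  "closure (connected_component_set S z) \<inter> S \<subseteq> connected_component_set S z"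
proof -
  obtain T where "closed T" "connected_component_set S z = S \<inter> T"
    using closedin_connected_component[of S z] unfolding closedin_closed by blast
  then show ?thesis using closure_minimal[of "connected_component_set S z" T] by blast
qed

text \<open>If the winding number of \<open>\<Gamma>\<close> vanishes off the open set \<open>S\<close>, it vanishes off the component of
  \<open>S\<close> containing \<open>\<Gamma>\<close>: a bounded component of \<open>- path_image \<Gamma>\<close> lying in another component of \<open>S\<close>
  would have its frontier both on \<open>\<Gamma>\<close> and in that other component.\<close>

lemma winding_number_zero_outside_connected_component:
  assumes \<Gamma>: "path \<Gamma>" "pathfinish \<Gamma> = pathstart \<Gamma>" and S: "open S" "path_image \<Gamma> \<subseteq> S"
    and zero: "\<And>w. w \<notin> S \<Longrightarrow> winding_number \<Gamma> w = 0"
    and z: "z \<notin> connected_component_set S (pathstart \<Gamma>)"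
  shows "winding_number \<Gamma> z = 0"
proof (cases "z \<in> S")
  case False with zero show ?thesis by blast
next
  case True
  define W where "W = connected_component_set S (pathstart \<Gamma>)"
  define W' where "W' = connected_component_set S z"
  define V where "V = connected_component_set (- path_image \<Gamma>) z"
  have \<Gamma>W: "path_image \<Gamma> \<subseteq> W" unfolding W_def
    by (rule connected_component_maximal[OF pathstart_in_path_image
          connected_path_image[OF \<Gamma>(1)] S(2)])
  have "z \<in> W'" unfolding W'_def using True by simp
  then have disjoint: "W \<inter> W' = {}"
    using z connected_component_nonoverlap unfolding W_def W'_def by metis
  have "z \<notin> path_image \<Gamma>" using z \<Gamma>W unfolding W_def by blast
  then have zV: "z \<in> V" unfolding V_def by simp
  have const: "winding_number \<Gamma> q = winding_number \<Gamma> z" if "q \<in> V" for q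
    using winding_number_eq[OF \<Gamma> that zV] connected_component_subset[of "- path_image \<Gamma>" z]
    unfolding V_def by blast
  consider "\<not> V \<subseteq> S" | "\<not> bounded V" | "V \<subseteq> S" "bounded V" by argo
  then show ?thesis
  proof cases
    case 1
    then obtain q where "q \<in> V" "q \<notin> S" by blast
    then show ?thesis using const[of q] zero[of q] by simp
  next
    case 2
    obtain B where "\<And>w. B \<le> norm w \<Longrightarrow> winding_number \<Gamma> w = 0"
      using winding_number_zero_at_infinity[OF \<Gamma>] by blast
    moreover obtain q where "q \<in> V" "\<not> norm q \<le> B"
      using 2 unfolding bounded_iff by blast
    ultimately show ?thesis using const[of q] by simp
  next
    case 3
    have "V \<noteq> {}" "V \<noteq> UNIV" using zV 3(2) not_bounded_UNIV by auto
    then obtain q where q: "q \<in> frontier V" using frontier_not_empty by blast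
    have "frontier V \<subseteq> path_image \<Gamma>" unfolding V_def
      using frontier_of_connected_component_subset[of "- path_image \<Gamma>" z]
        frontier_subset_closed[OF closed_path_image[OF \<Gamma>(1)]] by (simp add: frontier_complement)
    with q have "q \<in> W" "q \<in> S" using \<Gamma>W S(2) by auto
    moreover have "V \<subseteq> W'" unfolding W'_def
      by (rule connected_component_maximal[OF zV _ 3(1)]) (simp add: V_def)
    then have "q \<in> closure W'" using q closure_mono unfolding frontier_def by blast
    ultimately have "q \<in> W \<inter> W'"
      using closure_connected_component_Int_open[of S z, folded W'_def] by blast
    then show ?thesis using disjoint by blast
  qed
qed

text \<open>The residue theorem for a single singularity, without assuming \<open>S\<close> connected.\<close>

lemma contour_integral_eq_winding_number_residue:
  assumes S: "open S" and g: "g holomorphic_on S - {l}"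
    and \<Gamma>: "valid_path \<Gamma>" "pathfinish \<Gamma> = pathstart \<Gamma>" "path_image \<Gamma> \<subseteq> S - {l}"
    and zero: "\<And>w. w \<notin> S \<Longrightarrow> winding_number \<Gamma> w = 0"
  shows "contour_integral \<Gamma> g = 2 * pi * \<i> * winding_number \<Gamma> l * residue g l"
proof -
  define W where "W = connected_component_set S (pathstart \<Gamma>)"
  have path: "path \<Gamma>" by (rule valid_path_imp_path[OF \<Gamma>(1)])
  have "path_image \<Gamma> \<subseteq> W" unfolding W_def
    using connected_component_maximal[OF pathstart_in_path_image connected_path_image[OF path]]
      \<Gamma>(3) by blast
  moreover have "W \<subseteq> S" unfolding W_def by (rule connected_component_subset)
  moreover have "winding_number \<Gamma> w = 0" if "w \<notin> W" for w
    using winding_number_zero_outside_connected_component[OF path \<Gamma>(2) S _ zero]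
      that \<Gamma>(3) unfolding W_def by blast
  ultimately have "contour_integral \<Gamma> g = 2 * pi * \<i> * (\<Sum>p\<in>{l}. winding_number \<Gamma> p * residue g p)"
    using \<Gamma> by (intro Residue_theorem[of W] holomorphic_on_subset[OF g])
      (auto simp: W_def open_connected_component[OF S] connected_connected_component)
  then show ?thesis by simp
qed

section \<open>Roots of unity and sectors\<close>

lemma cis_eq_1D: "cis x = 1 \<Longrightarrow> \<exists>m::int. x = 2 * pi * of_int m"
proof -
  assume "cis x = 1"
  then have "exp (\<i> * complex_of_real x) = 1" by (simp add: cis_conv_exp)
  then obtain m :: int where "Im (\<i> * complex_of_real x) = of_int (2 * m) * pi"
    unfolding exp_eq_1 by blast
  then show ?thesis by auto
qed

lemma cis_2pi_div_power_eq_1_iff: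
  assumes "n > 0" "k < n"
  shows "cis (2 * pi / real n) ^ k = 1 \<longleftrightarrow> k = 0"
proof
  assume "cis (2 * pi / real n) ^ k = 1"
  then have "cis (real k * (2 * pi / real n)) = 1" by (simp only: Complex.DeMoivre)
  then obtain m :: int where "real k * (2 * pi / real n) = 2 * pi * of_int m"
    using cis_eq_1D by blast
  then have "real k = real n * of_int m" using assms(1) by (simp add: field_simps)
  then have km: "int k = int n * m" by (metis of_int_eq_iff of_int_mult of_int_of_nat_eq)
  show "k = 0"
  proof (rule ccontr)
    assume "k \<noteq> 0"
    then have "0 < int n * m" using km by simp
    then have "0 < m" by (simp add: zero_less_mult_iff)
    then have "int n * 1 \<le> int n * m" by (intro mult_left_mono) auto
    moreover have "int k < int n" using assms(2) by simp
    ultimately show False using km by linarith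
  qed
qed simp

lemma cis_2pi_div_power_self: "n > 0 \<Longrightarrow> cis (2 * pi / real n) ^ n = 1"
  using cis_multiple_2pi[of 1] by (simp add: Complex.DeMoivre)

lemma angle_sector_polar:
  assumes "z \<in> angle_sector \<theta> w" "z \<noteq> 0"
  obtains t where "\<theta> \<le> t" "t \<le> \<theta> + w" "z = of_real (cmod z) * cis t"
  using assms unfolding angle_sector_def by blast

lemma angle_sector_power_inj:
  assumes n: "n > 0" and w: "w < 2 * pi / real n"
    and z: "z \<in> angle_sector \<theta> w" "z \<noteq> 0" and u: "u \<in> angle_sector \<theta> w"
    and eq: "u ^ n = z ^ n"
  shows "u = z"
proof -
  have "cmod u ^ n = cmod z ^ n" using arg_cong[OF eq, of cmod] by (simp add: norm_power)
  then have r: "cmod u = cmod z" using n by (simp add: power_eq_imp_eq_base)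
  then have "u \<noteq> 0" using z(2) by auto
  obtain s where s: "\<theta> \<le> s" "s \<le> \<theta> + w" "u = of_real (cmod u) * cis s"
    using angle_sector_polar[OF u \<open>u \<noteq> 0\<close>] .
  obtain t where t: "\<theta> \<le> t" "t \<le> \<theta> + w" "z = of_real (cmod z) * cis t"
    using angle_sector_polar[OF z] .
  have "of_real (cmod z) ^ n * cis s ^ n = of_real (cmod z) ^ n * cis t ^ n"
    using eq s(3) t(3) r by (metis power_mult_distrib)
  then have "cis (real n * s - real n * t) = 1"
    using z(2) by (simp add: Complex.DeMoivre cis_divide[symmetric])
  then obtain m :: int where m: "real n * (s - t) = 2 * pi * of_int m"
    using cis_eq_1D by (auto simp: right_diff_distrib)
  have "\<bar>real n * (s - t)\<bar> \<le> real n * w"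
    using s t n by (simp add: abs_mult)
  also have "\<dots> < 2 * pi" using w n by (simp add: field_simps)
  finally have "\<bar>of_int m :: real\<bar> < 1" unfolding m by (simp add: abs_mult)
  then have "m = 0" by linarith
  then have "s = t" using m n by simp
  then show ?thesis using s(3) t(3) r by simp
qed

lemma sum_power_inverse_rotations:
  assumes "n > 0" "k < n"
  shows "(\<Sum>j<n. inverse (l * cis (2 * pi / real n) ^ j) ^ k) = (if k = 0 then of_nat n else 0)"
proof -
  define \<zeta> where "\<zeta> = cis (2 * pi / real n)"
  have swap: "(a ^ i) ^ j = (a ^ j) ^ i" for a :: complex and i j by (metis power_mult mult.commute)
  have "inverse (l * \<zeta> ^ j) ^ k = inverse l ^ k * inverse (\<zeta> ^ k) ^ j" for j
    by (simp add: power_mult_distrib power_inverse swap[of \<zeta> j k])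
  then have "(\<Sum>j<n. inverse (l * \<zeta> ^ j) ^ k) = inverse l ^ k * (\<Sum>j<n. inverse (\<zeta> ^ k) ^ j)"
    by (simp add: sum_distrib_left)
  moreover have "(\<Sum>j<n. inverse (\<zeta> ^ k) ^ j) = 0" if "k \<noteq> 0"
  proof -
    have "inverse (\<zeta> ^ k) ^ n = 1"
      unfolding \<zeta>_def
        by (simp add: power_inverse swap[of _ k n] cis_2pi_div_power_self[OF assms(1)])
    moreover have "inverse (\<zeta> ^ k) \<noteq> 1"
      unfolding \<zeta>_def using cis_2pi_div_power_eq_1_iff[OF assms] that by simp
    ultimately show ?thesis by (simp add: sum_gp_strict)
  qed
  ultimately show ?thesis unfolding \<zeta>_def by simp
qed

section \<open>Eigenvectors from eigenvectors of a power\<close>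

text \<open>A discrete Fourier coefficient of the orbit \<open>u, X u, \<dots>, X\<^sup>n\<^sup>-\<^sup>1 u\<close>.\<close>

lemma eigenvector_of_power_eigenvector:
  fixes X :: "'a::complex_hilbert \<Rightarrow> 'a"
  assumes X: "clinear_op X" and z: "z \<noteq> 0" and u: "(X ^^ n) u = z ^ n *\<^sub>C u"
  shows "X (\<Sum>k<n. inverse z ^ k *\<^sub>C (X ^^ k) u) = z *\<^sub>C (\<Sum>k<n. inverse z ^ k *\<^sub>C (X ^^ k) u)"
proof -
  define f where "f k = inverse z ^ k *\<^sub>C (X ^^ k) u" for k
  have step: "X (f k) = z *\<^sub>C f (Suc k)" for k
    unfolding f_def using z by (simp add: clinear_op_scaleC[OF X] scaleC_scaleC field_simps)
  have "f n = f 0" unfolding f_def u scaleC_scaleC using z by (simp add: power_inverse)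
  then have "z *\<^sub>C (\<Sum>k<n. f (Suc k) - f k) = 0" by (simp add: sum_lessThan_telescope)
  then show ?thesis unfolding f_def[symmetric]
    by (simp add: clinear_op_sum[OF X] step scaleC_sum_right scaleC_diff_right sum_subtractf)
qed

text \<open>\<open>n u\<close> is the sum of the discrete Fourier components \<open>w j\<close> of \<open>u\<close>, which are eigenvectors of
  \<open>X\<close> for the eigenvalues \<open>\<lambda> \<zeta>\<^sup>j\<close>, \<open>\<zeta> = cis (2\<pi>/n)\<close>; all but \<open>w 0\<close> vanish.\<close>

lemma eigenvector_from_power:
  fixes X :: "'a::complex_hilbert \<Rightarrow> 'a"
  assumes X: "clinear_op X" and n: "n > 0" and l: "l \<noteq> 0"
    and u: "(X ^^ n) u = l ^ n *\<^sub>C u"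
    and no_eigen: "\<And>\<omega> w. \<omega> ^ n = l ^ n \<Longrightarrow> \<omega> \<noteq> l \<Longrightarrow> X w = \<omega> *\<^sub>C w \<Longrightarrow> w = 0"
  shows "X u = l *\<^sub>C u"
proof -
  define \<zeta> where "\<zeta> = cis (2 * pi / real n)"
  have \<zeta>: "\<zeta> \<noteq> 0" "\<zeta> ^ n = 1" "\<And>k. k < n \<Longrightarrow> \<zeta> ^ k = 1 \<longleftrightarrow> k = 0"
    unfolding \<zeta>_def using cis_2pi_div_power_self cis_2pi_div_power_eq_1_iff n by auto
  define z where "z j = l * \<zeta> ^ j" for j
  have "(\<zeta> ^ j) ^ n = 1" for j by (metis \<zeta>(2) power_mult mult.commute power_one)
  then have zn: "z j ^ n = l ^ n" for j unfolding z_def by (simp add: power_mult_distrib)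
  define w where "w j = (\<Sum>k<n. inverse (z j) ^ k *\<^sub>C (X ^^ k) u)" for j
  have eigen: "X (w j) = z j *\<^sub>C w j" for j
    unfolding w_def
      by (rule eigenvector_of_power_eigenvector[OF X]) (use l \<zeta> zn u in \<open>simp_all add: z_def\<close>)
  have w_zero: "w j = 0" if "0 < j" "j < n" for j
    using no_eigen[OF zn _ eigen] \<zeta>(3)[OF that(2)] that l by (simp add: z_def)
  have coeff: "(\<Sum>j<n. inverse (z j) ^ k) = (if k = 0 then of_nat n else 0)" if "k < n" for k
    unfolding z_def \<zeta>_def by (rule sum_power_inverse_rotations[OF n that])
  have "(\<Sum>j<n. w j) = (\<Sum>k<n. (\<Sum>j<n. inverse (z j) ^ k) *\<^sub>C (X ^^ k) u)"
    unfolding w_def scaleC_sum_left by (rule sum.swap)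
  also have "\<dots> = (\<Sum>k<n. if k = 0 then of_nat n *\<^sub>C u else 0)"
    by (intro sum.cong refl) (simp add: coeff)
  also have "\<dots> = of_nat n *\<^sub>C u"
    using n by (simp add: sum.delta)
  finally have sum_w: "(\<Sum>j<n. w j) = of_nat n *\<^sub>C u" .
  obtain m where "n = Suc m" using n gr0_implies_Suc by blast
  moreover have "(\<Sum>j<m. w (Suc j)) = 0" using w_zero calculation by (intro sum.neutral) auto
  ultimately have "(\<Sum>j<n. w j) = w 0" by (simp only: sum.lessThan_Suc_shift) simp
  then have "w 0 = of_nat n *\<^sub>C u" using sum_w by simp
  then have "of_nat n *\<^sub>C X u = of_nat n *\<^sub>C (l *\<^sub>C u)"
    using eigen[of 0] by (simp add: z_def clinear_op_scaleC[OF X] scaleC_scaleC mult.commute)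
  then show ?thesis using n by (simp add: scaleC_left_cancel)
qed

section \<open>The Riesz projection of an isolated point of the spectrum\<close>

locale isolated_spectral_point =
  fixes A :: "'a::complex_hilbert \<Rightarrow> 'a" and l :: complex and \<Gamma> :: "real \<Rightarrow> complex" and \<delta> :: real
  assumes bounded: "bounded_op A"
    and contour: "riesz_contour A l \<Gamma>"
    and in_spectrum: "l \<in> op_spectrum A"
    and radius_pos: "0 < \<delta>"
    and separated: "\<And>z. z \<in> op_spectrum A \<Longrightarrow> z \<noteq> l \<Longrightarrow> \<delta> \<le> cmod (z - l)"
begin

lemma riesz_contourD:
  "valid_path \<Gamma>" "pathfinish \<Gamma> = pathstart \<Gamma>" "path_image \<Gamma> \<subseteq> - op_spectrum A"
  "winding_number \<Gamma> l = 1" "\<And>z. z \<in> op_spectrum A - {l} \<Longrightarrow> winding_number \<Gamma> z = 0"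
  using contour unfolding riesz_contour_def by auto

lemma punctured_cball_subset: "0 < \<rho> \<Longrightarrow> \<rho> < \<delta> \<Longrightarrow> cball l \<rho> - {l} \<subseteq> - op_spectrum A"
  using separated by (force simp: dist_norm norm_minus_commute)

lemma contour_integrable_on_contour:
  "g holomorphic_on - op_spectrum A \<Longrightarrow> g contour_integrable_on \<Gamma>"
  using contour_integrable_holomorphic_simple[OF _ open_resolvent_set[OF bounded]] riesz_contourD
  by blast

lemma contour_integral_eq_circlepath:
  assumes g: "g holomorphic_on - op_spectrum A" and \<rho>: "0 < \<rho>" "\<rho> < \<delta>"
  shows "contour_integral \<Gamma> g = contour_integral (circlepath l \<rho>) g"
proof -
  define S where "S = - (op_spectrum A - {l})"
  have "op_spectrum A - {l} = op_spectrum A - ball l \<delta>"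
    using separated radius_pos by (force simp: dist_norm norm_minus_commute)
  then have S: "open S" unfolding S_def
    by (simp add: open_Un open_resolvent_set[OF bounded])
  have gS: "g holomorphic_on S - {l}"
    by (rule holomorphic_on_subset[OF g]) (auto simp: S_def)
  have "contour_integral \<Gamma> g = 2 * pi * \<i> * winding_number \<Gamma> l * residue g l"
    by (rule contour_integral_eq_winding_number_residue[OF S gS])
      (use riesz_contourD in_spectrum in \<open>auto simp: S_def\<close>)
  moreover have "(g has_contour_integral 2 * pi * \<i> * residue g l) (circlepath l \<rho>)"
    by (rule base_residue[OF S _ \<rho>(1) gS]) (use punctured_cball_subset[OF \<rho>] in \<open>auto simp: S_def\<close>)
  ultimately show ?thesis using riesz_contourD(4) contour_integral_unique by simp
qed

lemma norm_contour_integral_cinner_resolvent_le: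
  assumes p: "p holomorphic_on UNIV" and \<rho>: "0 < \<rho>" "\<rho> < \<delta>"
    and c: "\<And>\<mu>. cmod (\<mu> - l) = \<rho> \<Longrightarrow> cmod (p \<mu>) \<le> c"
    and M: "\<And>\<mu>. cmod (\<mu> - l) = \<rho> \<Longrightarrow> norm (resolvent A \<mu> x) \<le> M"
  shows "cmod (contour_integral \<Gamma> (\<lambda>\<mu>. p \<mu> * cinner y (resolvent A \<mu> x)) / (2 * pi * \<i>))
    \<le> \<rho> * c * M * norm y"
proof -
  define g where "g \<mu> = p \<mu> * cinner y (resolvent A \<mu> x)" for \<mu>
  have g: "g holomorphic_on - op_spectrum A" unfolding g_def
    by (intro holomorphic_intros holomorphic_on_subset[OF p]
        holomorphic_on_cinner_resolvent[OF bounded]) auto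
  have sphere: "sphere l \<rho> \<subseteq> - op_spectrum A"
    using punctured_cball_subset[OF \<rho>] \<rho>(1) by auto
  have "g contour_integrable_on circlepath l \<rho>"
    using sphere \<rho>(1)
      by (intro contour_integrable_holomorphic_simple[OF g open_resolvent_set[OF bounded]]) auto
  moreover have "0 \<le> c" "0 \<le> M"
    using c[of "l + of_real \<rho>"] M[of "l + of_real \<rho>"] \<rho>(1)
      by (auto intro: order_trans[OF norm_ge_zero])
  moreover have "cmod (g \<mu>) \<le> c * M * norm y" if "cmod (\<mu> - l) = \<rho>" for \<mu>
    unfolding g_def norm_mult
    using mult_mono[OF c[OF that] order_trans[OF cmod_cinner_le mult_left_mono[OF M[OF that]]]]
      \<open>0 \<le> c\<close>
    by (simp add: mult.commute mult.left_commute)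
  ultimately have "cmod (contour_integral (circlepath l \<rho>) g) \<le> c * M * norm y * (2 * pi * \<rho>)"
    using \<rho>(1)
      by (intro has_contour_integral_bound_circlepath[OF has_contour_integral_integral]) auto
  then show ?thesis
    unfolding g_def[symmetric] contour_integral_eq_circlepath[OF g \<rho>]
    by (simp add: norm_divide norm_mult field_simps)
qed

lemma cinner_riesz_projection:
  "cinner y (riesz_projection A \<Gamma> x)
    = contour_integral \<Gamma> (\<lambda>\<mu>. cinner y (resolvent A \<mu> x)) / (2 * pi * \<i>)"
proof -
  define F where "F y = contour_integral \<Gamma> (\<lambda>\<mu>. cinner y (resolvent A \<mu> x)) / (2 * pi * \<i>)" for y
  define \<rho> where "\<rho> = \<delta> / 2"
  have \<rho>: "0 < \<rho>" "\<rho> < \<delta>" unfolding \<rho>_def using radius_pos by auto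
  have "sphere l \<rho> \<subseteq> - op_spectrum A"
    using punctured_cball_subset[OF \<rho>] \<rho>(1) by auto
  then obtain M where M: "\<And>\<mu>. \<mu> \<in> sphere l \<rho> \<Longrightarrow> norm (resolvent A \<mu> x) \<le> M"
    using resolvent_bounded_on_compact[OF bounded compact_sphere] by blast
  have integrable: "(\<lambda>\<mu>. cinner y (resolvent A \<mu> x)) contour_integrable_on \<Gamma>" for y
    by (rule contour_integrable_on_contour[OF holomorphic_on_cinner_resolvent[OF bounded]])
  obtain v where v: "\<And>y. F y = cinner y v"
  proof (rule conjugate_Riesz_representation)
    show "F (y1 + y2) = F y1 + F y2" for y1 y2
      unfolding F_def
      by (simp add: cinner_add_left contour_integral_add[OF integrable integrable]
          add_divide_distrib)
    show "F (c *\<^sub>C y) = cnj c * F y" for c y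
      unfolding F_def by (simp add: cinner_scaleC_left contour_integral_lmul[OF integrable])
    show "cmod (F y) \<le> (\<rho> * 1 * M) * norm y" for y
      using norm_contour_integral_cinner_resolvent_le[of "\<lambda>_. 1", OF _ \<rho>, of 1 x M y] M
      unfolding F_def by (simp add: dist_norm norm_minus_commute)
  qed blast
  have "riesz_projection A \<Gamma> x = v"
    unfolding riesz_projection_def
    by (rule the_equality) (use v in \<open>auto simp: F_def intro: cinner_eq_cinner_right_imp_eq\<close>)
  then show ?thesis using v unfolding F_def by simp
qed

lemma cinner_riesz_projection_adjoint_eigenvector:
  assumes "cadjoint A u = cnj l *\<^sub>C u"
  shows "cinner u (riesz_projection A \<Gamma> x) = cinner u x"
proof -
  have l: "l \<notin> path_image \<Gamma>" using riesz_contourD(3) in_spectrum by blast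
  have "contour_integral \<Gamma> (\<lambda>\<mu>. cinner u (resolvent A \<mu> x))
      = contour_integral \<Gamma> (\<lambda>\<mu>. cinner u x * (1 / (\<mu> - l)))"
  proof (rule contour_integral_eq)
    fix \<mu> assume "\<mu> \<in> path_image \<Gamma>"
    then have \<mu>: "\<mu> \<notin> op_spectrum A" "\<mu> - l \<noteq> 0" using riesz_contourD(3) l by auto
    show "cinner u (resolvent A \<mu> x) = cinner u x * (1 / (\<mu> - l))"
      using cinner_resolvent_adjoint_eigenvector[OF bounded assms \<mu>(1), of x] \<mu>(2)
      by (simp add: field_simps)
  qed
  also have "\<dots> = cinner u x * contour_integral \<Gamma> (\<lambda>\<mu>. 1 / (\<mu> - l))"
    by (rule contour_integral_lmul[OF contour_integrable_inversediff[OF riesz_contourD(1) l]])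
  also have "contour_integral \<Gamma> (\<lambda>\<mu>. 1 / (\<mu> - l)) = 2 * pi * \<i>"
    using winding_number_valid_path[OF riesz_contourD(1) l] riesz_contourD(4) by simp
  finally show ?thesis unfolding cinner_riesz_projection by simp
qed

text \<open>Applying \<open>\<beta> - A\<^sup>n\<close> to \<open>(\<mu> - A)\<^sup>-\<^sup>1\<close> multiplies it by \<open>\<beta> - \<mu>\<^sup>n\<close> up to a polynomial in \<open>\<mu>\<close>,
  whose integral over the closed path \<open>\<Gamma>\<close> vanishes.\<close>

lemma cinner_funpow_shift_op_riesz_projection:
  "cinner y ((shift_op \<beta> (A ^^ n) ^^ k) (riesz_projection A \<Gamma> x))
    = contour_integral \<Gamma> (\<lambda>\<mu>. (\<beta> - \<mu> ^ n) ^ k * cinner y (resolvent A \<mu> x)) / (2 * pi * \<i>)"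
proof (induction k arbitrary: y)
  case 0 then show ?case by (simp add: cinner_riesz_projection)
next
  case (Suc k)
  define T where "T = shift_op \<beta> (A ^^ n)"
  have T: "bounded_op T" unfolding T_def by (intro bounded_op_shift_op bounded_op_funpow bounded)
  define q where "q \<mu> = (\<beta> - \<mu> ^ n) ^ k * (\<Sum>j<n. \<mu> ^ (n - 1 - j) * cinner y ((A ^^ j) x))" for \<mu>
  have "((\<lambda>\<mu>. q \<mu>) has_contour_integral 0) \<Gamma>"
    by (rule Cauchy_theorem_global[of UNIV])
      (auto simp: q_def riesz_contourD intro!: holomorphic_intros)
  then have q: "q contour_integrable_on \<Gamma>" "contour_integral \<Gamma> q = 0"
    by (auto simp: contour_integrable_on_def contour_integral_unique)
  have "(\<beta> - \<mu> ^ n) ^ k * cinner (cadjoint T y) (resolvent A \<mu> x)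
      = (\<beta> - \<mu> ^ n) ^ Suc k * cinner y (resolvent A \<mu> x) + q \<mu>"
    if "\<mu> \<in> path_image \<Gamma>" for \<mu>
  proof -
    have "\<mu> \<notin> op_spectrum A" using that riesz_contourD(3) by auto
    then show ?thesis
      unfolding cinner_cadjoint_left[OF T] unfolding T_def q_def
      by (simp add: shift_op_funpow_resolvent[OF bounded] cinner_add_right cinner_scaleC_right
          cinner_sum_right algebra_simps)
  qed
  then have "contour_integral \<Gamma> (\<lambda>\<mu>. (\<beta> - \<mu> ^ n) ^ k * cinner (cadjoint T y) (resolvent A \<mu> x))
      = contour_integral \<Gamma> (\<lambda>\<mu>. (\<beta> - \<mu> ^ n) ^ Suc k * cinner y (resolvent A \<mu> x) + q \<mu>)"
    by (rule contour_integral_eq)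
  also have "\<dots> = contour_integral \<Gamma> (\<lambda>\<mu>. (\<beta> - \<mu> ^ n) ^ Suc k * cinner y (resolvent A \<mu> x))"
    using q by (simp add: contour_integral_add contour_integrable_on_contour holomorphic_intros
        holomorphic_on_cinner_resolvent[OF bounded])
  also have "contour_integral \<Gamma> (\<lambda>\<mu>. (\<beta> - \<mu> ^ n) ^ k * cinner (cadjoint T y) (resolvent A \<mu> x))
      = cinner (cadjoint T y) ((T ^^ k) (riesz_projection A \<Gamma> x)) * (2 * pi * \<i>)"
    unfolding T_def Suc.IH by simp
  also have "cinner (cadjoint T y) ((T ^^ k) (riesz_projection A \<Gamma> x))
      = cinner y ((T ^^ Suc k) (riesz_projection A \<Gamma> x))"
    by (simp add: cinner_cadjoint_left[OF T])
  finally show ?case unfolding T_def by (simp add: eq_divide_eq)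
qed

lemma norm_funpow_shift_op_riesz_projection_le:
  assumes \<rho>: "0 < \<rho>" "\<rho> < \<delta>"
    and c: "\<And>\<mu>. cmod (\<mu> - l) = \<rho> \<Longrightarrow> cmod (\<beta> - \<mu> ^ n) \<le> c"
    and M: "\<And>\<mu>. cmod (\<mu> - l) = \<rho> \<Longrightarrow> norm (resolvent A \<mu> x) \<le> M"
  shows "norm ((shift_op \<beta> (A ^^ n) ^^ k) (riesz_projection A \<Gamma> x)) \<le> \<rho> * c ^ k * M"
proof -
  define z where "z = (shift_op \<beta> (A ^^ n) ^^ k) (riesz_projection A \<Gamma> x)"
  have "0 \<le> c" "0 \<le> M"
    using c[of "l + of_real \<rho>"] M[of "l + of_real \<rho>"] \<rho>(1)
      by (auto intro: order_trans[OF norm_ge_zero])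
  then have "cmod ((\<beta> - \<mu> ^ n) ^ k) \<le> c ^ k" if "cmod (\<mu> - l) = \<rho>" for \<mu>
    unfolding norm_power by (intro power_mono c that) simp
  then have "cmod (cinner z z) \<le> \<rho> * c ^ k * M * norm z"
    unfolding z_def cinner_funpow_shift_op_riesz_projection
    by (intro norm_contour_integral_cinner_resolvent_le \<rho> M) (auto intro!: holomorphic_intros)
  then have "norm z * norm z \<le> (\<rho> * c ^ k * M) * norm z"
    by (simp add: cinner_self norm_mult power2_eq_square)
  then show ?thesis unfolding z_def[symmetric]
    by (cases "z = 0") (use \<rho> \<open>0 \<le> c\<close> \<open>0 \<le> M\<close> in \<open>auto intro: mult_right_le_imp_le\<close>)
qed

text \<open>For \<open>v = P x\<close> with \<open>T v \<noteq> 0\<close>, where \<open>T = \<lambda>\<^sup>n - A\<^sup>n\<close>, normality makes \<open>\<parallel>T\<^sup>k v\<parallel>\<close> grow at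
  least like \<open>r\<^sup>k\<close> with \<open>r = \<parallel>T v\<parallel> / \<parallel>v\<parallel>\<close>, while integrating over a circle so small that
  \<open>|\<lambda>\<^sup>n - \<mu>\<^sup>n| \<le> r/2\<close> bounds it by a multiple of \<open>(r/2)\<^sup>k\<close>.\<close>

lemma riesz_projection_in_kernel:
  assumes normal: "normal_op (shift_op (l ^ n) (A ^^ n))"
  shows "shift_op (l ^ n) (A ^^ n) (riesz_projection A \<Gamma> x) = 0"
proof (rule ccontr)
  define T where "T = shift_op (l ^ n) (A ^^ n)"
  define v where "v = riesz_projection A \<Gamma> x"
  assume "shift_op (l ^ n) (A ^^ n) (riesz_projection A \<Gamma> x) \<noteq> 0"
  then have Tv: "T v \<noteq> 0" unfolding T_def v_def .
  have T: "bounded_op T" unfolding T_def by (intro bounded_op_shift_op bounded_op_funpow bounded)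
  then have "v \<noteq> 0" using Tv clinear_op_zero[OF bounded_op_clinear_op] by auto
  define r where "r = norm (T v) / norm v"
  have r: "r > 0" unfolding r_def using Tv \<open>v \<noteq> 0\<close> by simp
  have lim: "((\<lambda>\<mu>. l ^ n - \<mu> ^ n) \<longlongrightarrow> 0) (at l)"
    by (auto intro!: tendsto_eq_intros)
  have "\<forall>\<^sub>F \<mu> in at l. dist (l ^ n - \<mu> ^ n) 0 < r / 2"
    using tendsto_iff[THEN iffD1, OF lim, rule_format, of "r / 2"] r by simp
  then obtain d where d: "d > 0" "\<And>\<mu>. \<mu> \<noteq> l \<and> dist \<mu> l < d \<longrightarrow> dist (l ^ n - \<mu> ^ n) 0 < r / 2"
    unfolding eventually_at by blast
  define \<rho> where "\<rho> = min (\<delta> / 2) (d / 2)"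
  have \<rho>: "0 < \<rho>" "\<rho> < \<delta>" "\<rho> < d" unfolding \<rho>_def using radius_pos d by auto
  have "sphere l \<rho> \<subseteq> - op_spectrum A" using punctured_cball_subset[OF \<rho>(1,2)] \<rho>(1) by auto
  then obtain M where M: "\<And>\<mu>. \<mu> \<in> sphere l \<rho> \<Longrightarrow> norm (resolvent A \<mu> x) \<le> M"
    using resolvent_bounded_on_compact[OF bounded compact_sphere] by blast
  have small: "cmod (l ^ n - \<mu> ^ n) \<le> r / 2" if "cmod (\<mu> - l) = \<rho>" for \<mu>
    using d(2)[of \<mu>] that \<rho> by (cases "\<mu> = l") (auto simp: dist_norm)
  have M': "norm (resolvent A \<mu> x) \<le> M" if "cmod (\<mu> - l) = \<rho>" for \<mu>
    using M that by (simp add: dist_norm norm_minus_commute)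
  have "r ^ k * norm v \<le> norm ((T ^^ k) v)" for k
    unfolding r_def by (rule normal_op_norm_funpow_ge[OF T normal[folded T_def] Tv])
  also have "norm ((T ^^ k) v) \<le> \<rho> * (r / 2) ^ k * M" for k
    unfolding T_def v_def by (rule norm_funpow_shift_op_riesz_projection_le[OF \<rho>(1,2) small M'])
  finally have "r ^ k * norm v \<le> \<rho> * (r / 2) ^ k * M" for k .
  then have "2 ^ k * norm v \<le> \<rho> * M" for k
    using r by (simp add: power_divide field_simps)
  moreover obtain k where "\<rho> * M / norm v < 2 ^ k" using real_arch_pow[of 2] by auto
  ultimately show False using \<open>v \<noteq> 0\<close> by (smt (verit) divide_less_eq zero_less_norm_iff)
qed

end

lemma cadjoint_eigenvector_if_power_kernel:
  assumes A: "bounded_op A" and n: "n > 0" and w: "w < 2 * pi / real n"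
    and sector: "op_spectrum A \<subseteq> angle_sector \<theta> w" and l: "l \<in> op_spectrum A" "l \<noteq> 0"
    and normal: "normal_op (shift_op (l ^ n) (A ^^ n))"
    and u: "shift_op (l ^ n) (A ^^ n) u = 0"
  shows "cadjoint A u = cnj l *\<^sub>C u"
proof (rule eigenvector_from_power[OF clinear_op_cadjoint[OF A] n])
  have An: "bounded_op (A ^^ n)" by (rule bounded_op_funpow[OF A])
  have "norm (cadjoint (shift_op (l ^ n) (A ^^ n)) u) = 0"
    using norm_cadjoint_normal_op[OF bounded_op_shift_op[OF An] normal] u by simp
  then show "(cadjoint A ^^ n) u = cnj l ^ n *\<^sub>C u"
    unfolding cadjoint_shift_op[OF An] cadjoint_funpow[OF A] by (simp add: shift_op_def)
  show "cnj l \<noteq> 0" using l by simp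
  fix \<omega> v assume \<omega>: "\<omega> ^ n = cnj l ^ n" "\<omega> \<noteq> cnj l" and v: "cadjoint A v = \<omega> *\<^sub>C v"
  have "cnj \<omega> \<notin> op_spectrum A"
  proof
    assume "cnj \<omega> \<in> op_spectrum A"
    moreover have "cnj \<omega> ^ n = l ^ n" using arg_cong[OF \<omega>(1), of cnj] by simp
    ultimately have "cnj \<omega> = l" using angle_sector_power_inj[OF n w] sector l by blast
    then show False using \<omega>(2) by auto
  qed
  then show "v = 0" using adjoint_eigenvector_eq_0[OF A, of v "cnj \<omega>"] v by simp
qed

theorem corollary3p4:
  fixes A :: "'a::complex_hilbert \<Rightarrow> 'a" and n :: nat and l :: complex
  assumes "infinite_dimensional TYPE('a)"
    and "n > 1"
    and "bounded_op A"
    and "cadjoint A \<circ> (A ^^ n) = (A ^^ n) \<circ> cadjoint A"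
    and "\<exists>\<theta> w. w < 2 * pi / real n \<and> op_spectrum A \<subseteq> angle_sector \<theta> w"
    and "l \<noteq> 0"
    and "l \<in> op_spectrum A"
    and "\<not> l islimpt op_spectrum A"
  shows "\<forall>\<Gamma>. riesz_contour A l \<Gamma> \<longrightarrow> self_adjoint_op (riesz_projection A \<Gamma>)"
proof (intro allI impI)
  fix \<Gamma> assume \<Gamma>: "riesz_contour A l \<Gamma>"
  obtain \<delta> where "0 < \<delta>" "\<And>z. z \<in> op_spectrum A \<Longrightarrow> z \<noteq> l \<Longrightarrow> \<delta> \<le> cmod (z - l)"
    using assms(8) unfolding islimpt_approachable dist_norm by (metis not_less)
  then interpret isolated_spectral_point A l \<Gamma> \<delta>
    using assms(3,7) \<Gamma> by unfold_locales
  obtain \<theta> w where sector: "w < 2 * pi / real n" "op_spectrum A \<subseteq> angle_sector \<theta> w"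
    using assms(5) by blast
  have normal: "normal_op (shift_op (l ^ n) (A ^^ n))"
    using assms(3,4) by (intro normal_op_shift_op bounded_op_funpow normal_op_funpowI)
  define P where "P = riesz_projection A \<Gamma>"
  have "cadjoint A (P x) = cnj l *\<^sub>C P x" for x
    unfolding P_def using assms(2,3,6,7) sector riesz_projection_in_kernel[OF normal]
    by (intro cadjoint_eigenvector_if_power_kernel[OF _ _ _ _ _ _ normal]) auto
  then have "cinner (P x) (P y) = cinner (P x) y" for x y
    unfolding P_def by (rule cinner_riesz_projection_adjoint_eigenvector)
  then show "self_adjoint_op P"
    unfolding self_adjoint_op_def by (metis cinner_conj)
qed

end
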